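(* Let $\delta$ be a constant with $\mathrm{e}<\delta\le\sum_{j=1}^{5}(5/6)^j$. There is a constant $C>0$ (depending only on $\delta$) such that for every $k\ge 2$, when $k$ nodes of a one-hop radio network without collision detection all receive a message at time $0$ and each runs protocol One-fail Adaptive with parameter $\delta$, all $k$ messages are delivered within $2(\delta+1)k+C\log^2 k$ communication steps with probability at least $1-2/(1+k)$.
   Context: Model (one-hop Radio Network without collision detection): time is divided into synchronous communication steps $1,2,\dots$. A node holding an undelivered message is active. In each step each active node may transmit. If exactly one node transmits, the transmission is successful: its message is delivered, all other nodes receive it, and the transmitting node becomes idle, never transmitting again. If zero or at least two nodes transmit, nobody receives anything, and nodes cannot distinguish these two cases. Nodes have no prior information (not the number $k$ of active nodes, nor the total number of nodes, nor labels). Static $k$-selection: $k$ nodes are activated simultaneously; the problem is solved when all $k$ messages have been delivered. $\log$ denotes $\log_2$. Protocol One-fail Adaptive with parameter $\delta$, run by each active node: initially set $\widetilde\kappa\leftarrow\delta+1$ and $\sigma\leftarrow0$. In each step $s=1,2,\dots$: if $s$ is even (a BT-step), transmit with probability $1/(1+\log(\sigma+1))$; if $s$ is odd (an AT-step), transmit with probability $1/\widetilde\kappa$ and then set $\widetilde\kappa\leftarrow\widetilde\kappa+1$. Whenever the node receives a message from another node in step $s$: set $\sigma\leftarrow\sigma+1$, and if $s$ is even set $\widetilde\kappa\leftarrow\max\{\widetilde\kappa-\delta,\delta+1\}$, while if $s$ is odd set $\widetilde\kappa\leftarrow\max\{\widetilde\kappa-\delta-1,\delta+1\}$. The node stops as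 soon as its own message is delivered. *)

theory Defs
  imports "HOL-Probability.Probability"
begin

text \<open>Local state of an active node: (sigma, kappa~). All nodes are labelled 0..k-1
  (labels are only used for the model; the protocol does not use them).\<close>

type_synonym lstate = "nat \<times> real"
type_synonym gstate = "nat set \<times> (nat \<Rightarrow> lstate)"

text \<open>Transmission probability of a node in step s (BT-step if s even, AT-step if s odd).\<close>
definition txprob :: "nat \<Rightarrow> lstate \<Rightarrow> real" where
  "txprob s st = (if even s then 1 / (1 + log 2 (real (fst st) + 1)) else 1 / snd st)"

definition tick :: "nat \<Rightarrow> lstate \<Rightarrow> lstate" where
  "tick s st = (if odd s then (fst st, snd st + 1) else st)"

definition recv :: "real \<Rightarrow> nat \<Rightarrow> lstate \<Rightarrow> lstate" where
  "recv \<delta> s st = (fst st + 1,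
      (if even s then max (snd st - \<delta>) (\<delta> + 1) else max (snd st - \<delta> - 1) (\<delta> + 1)))"

definition outcome :: "real \<Rightarrow> nat \<Rightarrow> gstate \<Rightarrow> (nat \<Rightarrow> bool) \<Rightarrow> gstate" where
  "outcome \<delta> s g f =
     (let A = fst g; T = {i \<in> A. f i}; loc' = (\<lambda>j. tick s (snd g j)) in
      if card T = 1 then (A - T, \<lambda>j. recv \<delta> s (loc' j)) else (A, loc'))"

definition ofa_step :: "real \<Rightarrow> nat \<Rightarrow> gstate \<Rightarrow> gstate pmf" where
  "ofa_step \<delta> s g =
     map_pmf (outcome \<delta> s g)
       (Pi_pmf (fst g) False (\<lambda>i. bernoulli_pmf (txprob s (snd g i))))"

text \<open>Distribution of the global state after n steps (steps numbered 1,2,...),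
  starting with k active nodes, each with sigma = 0 and kappa~ = delta + 1.\<close>
primrec ofa_run :: "real \<Rightarrow> nat \<Rightarrow> nat \<Rightarrow> gstate pmf" where
  "ofa_run \<delta> k 0 = return_pmf ({..<k}, \<lambda>_. (0, \<delta> + 1))"
| "ofa_run \<delta> k (Suc n) = bind_pmf (ofa_run \<delta> k n) (ofa_step \<delta> (Suc n))"

end

theory Submission
  imports Defs
begin

text \<open>
  Since all nodes start alike and every update of the protocol is applied to
  all active nodes at once, the active nodes always share one local state; the number of
  transmitters is binomial, so the global process projects onto a Markov chain on
  (number n of active nodes, common state (sigma, kappa~)) that finishes with the same
  probability (section 1).  Along this chain kappa~ grows by one every AT-step and drops by
  about delta + 1 per success, which bounds kappa~ from below in terms of the time (section 2).

  Completion is shown with capped exponential potentials and Markov's inequality: a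
  potential F with  E[F_{t+1}] \<le> F_t + eps  that is at least M at time T whenever a message
  is undelivered gives failure probability at most (F_0 + T eps)/M.  For large k a main-phase
  potential (AT-steps succeed with probability about n/(e kappa~), and delta > e makes
  kappa~ drift towards n) is glued to a final-phase potential (with O(log k) nodes left,
  BT-steps succeed with probability Omega(1/log k)); the phases need
  2(delta + 1)k + O(log^2 k) steps, and M = (k+1)^4 yields the bound 2/(k+1).  For each of
  the finitely many small k a first-phase potential gives some finite time, which is absorbed
  into the constant C.
\<close>
section \<open>Reduction to a chain on (number of active nodes, common local state)\<close>

text \<open>All nodes start in the same local state and every update (tick on an AT-step,
  recv on a success) is applied uniformly to all nodes, so all active nodes always share
  one local state.  Since nodes transmit independently, the number of transmitters is
  binomial, and a step succeeds with probability  n p (1-p)^(n-1).  Hence the global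
  process projects onto a Markov chain on pairs  (n, state).\<close>

definition summary :: "gstate \<Rightarrow> nat \<times> lstate" where
  "summary g = (card (fst g), snd g 0)"

definition succ_prob :: "nat \<Rightarrow> nat \<Rightarrow> lstate \<Rightarrow> real" where
  "succ_prob s n st = real n * txprob s st * (1 - txprob s st) ^ (n - 1)"

definition red_succ :: "real \<Rightarrow> nat \<Rightarrow> nat \<times> lstate \<Rightarrow> nat \<times> lstate" where
  "red_succ \<delta> s x = (fst x - 1, recv \<delta> s (tick s (snd x)))"

definition red_fail :: "nat \<Rightarrow> nat \<times> lstate \<Rightarrow> nat \<times> lstate" where
  "red_fail s x = (fst x, tick s (snd x))"

definition red_step :: "real \<Rightarrow> nat \<Rightarrow> nat \<times> lstate \<Rightarrow> (nat \<times> lstate) pmf" where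
  "red_step \<delta> s x = map_pmf (\<lambda>b. if b then red_succ \<delta> s x else red_fail s x)
                       (bernoulli_pmf (succ_prob s (fst x) (snd x)))"

primrec red_run :: "real \<Rightarrow> nat \<Rightarrow> nat \<Rightarrow> (nat \<times> lstate) pmf" where
  "red_run \<delta> k 0 = return_pmf (k, (0, \<delta> + 1))"
| "red_run \<delta> k (Suc n) = bind_pmf (red_run \<delta> k n) (red_step \<delta> (Suc n))"

lemma binomial_exactly_one:
  assumes "0 \<le> p" "p \<le> 1"
  shows "map_pmf (\<lambda>c. c = 1) (binomial_pmf n p) = bernoulli_pmf (real n * p * (1 - p) ^ (n - 1))"
proof (rule pmf_eqI)
  fix b :: bool
  define q where "q = real n * p * (1 - p) ^ (n - 1)"
  have q: "pmf (binomial_pmf n p) 1 = q" using assms by (simp add: q_def)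
  have q01: "0 \<le> q" "q \<le> 1" using pmf_le_1[of "binomial_pmf n p" 1] q by auto
  have one: "measure_pmf.prob (binomial_pmf n p) {1} = q"
    using q by (simp add: measure_pmf_single)
  have "measure_pmf.prob (binomial_pmf n p) (- {1}) = 1 - q"
    using measure_pmf.prob_compl[of "{1}" "binomial_pmf n p"] one
    by (simp add: Compl_eq_Diff_UNIV)
  then show "pmf (map_pmf (\<lambda>c. c = 1) (binomial_pmf n p)) b = pmf (bernoulli_pmf q) b"
    using one q01 by (cases b) (simp_all add: pmf_map vimage_def Compl_eq)
qed

definition uniform_state :: "real \<Rightarrow> gstate \<Rightarrow> bool" where
  "uniform_state \<delta> g \<longleftrightarrow> finite (fst g) \<and> (\<forall>j. snd g j = snd g 0) \<and> snd (snd g 0) \<ge> \<delta> + 1"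

lemma txprob_bounds:
  assumes "snd st \<ge> 1"
  shows "0 \<le> txprob s st" "txprob s st \<le> 1"
proof -
  have l: "0 \<le> log 2 (real (fst st) + 1)" by simp
  have aux: "\<And>x::real. 0 \<le> x \<Longrightarrow> 1 / (1 + x) \<le> 1" by (simp add: divide_le_eq)
  have a: "1 / (1 + log 2 (real (fst st) + 1)) \<le> 1" using aux[OF l] .
  have b: "1 / snd st \<le> 1" using assms by simp
  show "0 \<le> txprob s st" "txprob s st \<le> 1" using assms l a b by (auto simp: txprob_def)
qed

lemma succ_prob_bounds:
  assumes "snd st \<ge> 1"
  shows "0 \<le> succ_prob s n st" "succ_prob s n st \<le> 1"
proof -
  have "pmf (binomial_pmf n (txprob s st)) 1 = succ_prob s n st"
    using txprob_bounds[OF assms] by (simp add: succ_prob_def)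
  then show "0 \<le> succ_prob s n st" "succ_prob s n st \<le> 1" using pmf_le_1 pmf_nonneg by metis+
qed

lemma ofa_step_summary:
  assumes "uniform_state \<delta> g" "\<delta> \<ge> 0"
  shows "map_pmf summary (ofa_step \<delta> s g) = red_step \<delta> s (summary g)"
proof -
  obtain A loc where g: "g = (A, loc)" by (cases g)
  let ?st = "loc 0"
  let ?p = "txprob s ?st"
  have fin: "finite A" and loc: "\<And>j. loc j = ?st" and kp: "snd ?st \<ge> 1"
    using assms by (auto simp: uniform_state_def g)
  note p = txprob_bounds[OF kp, of s]
  have common: "Pi_pmf A False (\<lambda>i. bernoulli_pmf (txprob s (loc i)))
                = Pi_pmf A False (\<lambda>_. bernoulli_pmf ?p)"
    by (subst loc) simp
  define H where "H = (\<lambda>b. if b then red_succ \<delta> s (card A, ?st) else red_fail s (card A, ?st))"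
  have outcome: "summary (outcome \<delta> s g f) = H (card {i \<in> A. f i} = 1)" for f
  proof (cases "card {i \<in> A. f i} = 1")
    case True
    then have "card (A - {i \<in> A. f i}) = card A - 1"
      using fin by (subst card_Diff_subset) auto
    then show ?thesis using True
      by (simp add: outcome_def summary_def H_def red_succ_def g Let_def)
  qed (simp add: outcome_def summary_def H_def red_fail_def g Let_def)
  have "map_pmf summary (ofa_step \<delta> s g)
        = map_pmf H (map_pmf (\<lambda>c. c = 1)
            (map_pmf (\<lambda>f. card {i \<in> A. f i}) (Pi_pmf A False (\<lambda>_. bernoulli_pmf ?p))))"
    unfolding ofa_step_def pmf.map_comp o_def outcome by (simp add: g common)
  also have "map_pmf (\<lambda>f. card {i \<in> A. f i}) (Pi_pmf A False (\<lambda>_. bernoulli_pmf ?p))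
             = binomial_pmf (card A) ?p"
    using binomial_pmf_altdef'[OF fin refl, of ?p False] p by simp
  also have "map_pmf (\<lambda>c. c = 1) (binomial_pmf (card A) ?p) = bernoulli_pmf (succ_prob s (card A) ?st)"
    unfolding succ_prob_def using p by (rule binomial_exactly_one)
  finally have "map_pmf summary (ofa_step \<delta> s g) = map_pmf H (bernoulli_pmf (succ_prob s (card A) ?st))" .
  moreover have "summary g = (card A, ?st)" by (simp add: summary_def g)
  ultimately show ?thesis by (simp only: red_step_def H_def fst_conv snd_conv)
qed

lemma ofa_step_uniform:
  assumes "uniform_state \<delta> g" "g' \<in> set_pmf (ofa_step \<delta> s g)"
  shows "uniform_state \<delta> g'"
proof -
  obtain A loc where g: "g = (A, loc)" by (cases g)
  have fin: "finite A" and loc: "\<And>j. loc j = loc 0" and kp: "snd (loc 0) \<ge> \<delta> + 1"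
    using assms(1) by (auto simp: uniform_state_def g)
  obtain f where g': "g' = outcome \<delta> s g f" using assms(2) by (auto simp: ofa_step_def)
  have "snd (tick s (loc 0)) \<ge> \<delta> + 1" using kp by (auto simp: tick_def)
  moreover have "snd (recv \<delta> s x) \<ge> \<delta> + 1" for x by (auto simp: recv_def)
  ultimately show ?thesis
    using fin loc unfolding g' outcome_def g uniform_state_def Let_def
    by (auto simp del: One_nat_def) (metis loc)+
qed

lemma ofa_run_uniform: "g \<in> set_pmf (ofa_run \<delta> k t) \<Longrightarrow> uniform_state \<delta> g"
proof (induction t arbitrary: g)
  case 0
  then show ?case by (simp add: uniform_state_def)
qed (auto intro: ofa_step_uniform)

lemma ofa_run_summary:
  assumes "\<delta> \<ge> 0"
  shows "map_pmf summary (ofa_run \<delta> k t) = red_run \<delta> k t"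
proof (induction t)
  case (Suc t)
  have "map_pmf summary (ofa_run \<delta> k (Suc t))
        = bind_pmf (ofa_run \<delta> k t) (\<lambda>g. map_pmf summary (ofa_step \<delta> (Suc t) g))"
    by (simp add: map_bind_pmf)
  also have "\<dots> = bind_pmf (ofa_run \<delta> k t) (\<lambda>g. red_step \<delta> (Suc t) (summary g))"
    using ofa_run_uniform ofa_step_summary[OF _ assms] by (intro bind_pmf_cong) auto
  also have "\<dots> = bind_pmf (map_pmf summary (ofa_run \<delta> k t)) (red_step \<delta> (Suc t))"
    by (simp add: bind_map_pmf)
  finally show ?case using Suc by simp
qed (simp add: summary_def)

lemma prob_done_reduce:
  assumes "\<delta> \<ge> 0"
  shows "measure_pmf.prob (ofa_run \<delta> k t) {g. fst g = {}}
         = measure_pmf.prob (red_run \<delta> k t) {x. fst x = 0}"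
proof -
  have "measure_pmf.prob (ofa_run \<delta> k t) {g. fst g = {}}
        = measure_pmf.prob (ofa_run \<delta> k t) (summary -` {x. fst x = 0})"
    using ofa_run_uniform[of _ \<delta> k t]
    by (intro measure_pmf.finite_measure_eq_AE)
       (auto simp: AE_measure_pmf_iff summary_def uniform_state_def)
  then show ?thesis by (simp flip: ofa_run_summary[OF assms])
qed

lemma set_red_step:
  assumes "y \<in> set_pmf (red_step \<delta> s x)"
  shows "y = red_fail s x \<or> (fst x \<ge> 1 \<and> y = red_succ \<delta> s x)"
proof (cases "fst x = 0")
  case True
  then have "succ_prob s (fst x) (snd x) = 0" by (simp add: succ_prob_def)
  moreover have "bernoulli_pmf 0 = return_pmf False"
    by (rule pmf_eqI) (simp add: pmf_return split: split_indicator)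
  ultimately show ?thesis using assms by (auto simp: red_step_def)
qed (use assms in \<open>auto simp: red_step_def\<close>)

definition next_exp :: "real \<Rightarrow> nat \<Rightarrow> (nat \<Rightarrow> nat \<times> lstate \<Rightarrow> real) \<Rightarrow> nat \<times> lstate \<Rightarrow> real" where
  "next_exp \<delta> t F x =
     succ_prob (Suc t) (fst x) (snd x) * F (Suc t) (red_succ \<delta> (Suc t) x) +
     (1 - succ_prob (Suc t) (fst x) (snd x)) * F (Suc t) (red_fail (Suc t) x)"

lemma nn_integral_red_step:
  assumes "snd (snd x) \<ge> 1" and nonneg: "\<And>y. F (Suc t) y \<ge> 0"
  shows "(\<integral>\<^sup>+y. ennreal (F (Suc t) y) \<partial>red_step \<delta> (Suc t) x) = ennreal (next_exp \<delta> t F x)"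
proof -
  define q where "q = succ_prob (Suc t) (fst x) (snd x)"
  have q: "0 \<le> q" "q \<le> 1" using succ_prob_bounds[OF assms(1)] by (auto simp: q_def)
  have "(\<integral>\<^sup>+y. ennreal (F (Suc t) y) \<partial>red_step \<delta> (Suc t) x)
        = ennreal (F (Suc t) (red_succ \<delta> (Suc t) x)) * ennreal q
          + ennreal (F (Suc t) (red_fail (Suc t) x)) * ennreal (1 - q)"
    unfolding red_step_def nn_integral_map_pmf q_def[symmetric] using q
    by (subst nn_integral_bernoulli_pmf) auto
  also have "\<dots> = ennreal (next_exp \<delta> t F x)"
    using q nonneg unfolding next_exp_def q_def[symmetric]
    by (simp only: ennreal_plus[symmetric] ennreal_mult[symmetric] mult_nonneg_nonneg
                   diff_ge_0_iff_ge mult.commute)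
  finally show ?thesis .
qed

text \<open>Invariant of the reduced chain after t steps, starting with k nodes: sigma counts
  the successes so far, and kappa~ is at least delta + 1 and at least (number of AT-steps)
  minus (delta + 1) per success.  The last bound is what forces the final phase to start
  after about 2(delta + 1)k steps.\<close>
definition reach_inv :: "real \<Rightarrow> nat \<Rightarrow> nat \<Rightarrow> nat \<times> lstate \<Rightarrow> bool" where
  "reach_inv \<delta> k t x \<longleftrightarrow> fst x \<le> k \<and> fst (snd x) = k - fst x \<and> snd (snd x) \<ge> \<delta> + 1 \<and>
     snd (snd x) \<ge> (\<delta> + 1) * (real (fst x) + 1 - real k) + real ((t + 1) div 2)"

lemma red_fail_eq: "red_fail s (n, sg, kp) = (n, sg, kp + (if odd s then 1 else 0))"
  by (simp add: red_fail_def tick_def)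

lemma red_succ_eq: "red_succ \<delta> s (n, sg, kp) = (n - 1, sg + 1, max (kp - \<delta>) (\<delta> + 1))"
  by (simp add: red_succ_def tick_def recv_def)

lemma reach_inv_step:
  assumes "reach_inv \<delta> k t x" "y \<in> set_pmf (red_step \<delta> (Suc t) x)" "\<delta> \<ge> 0"
  shows "reach_inv \<delta> k (Suc t) y"
proof -
  obtain n sg kp where x: "x = (n, sg, kp)" by (cases x) auto
  have h: "n \<le> k" "sg = k - n" "kp \<ge> \<delta> + 1"
          "kp \<ge> (\<delta> + 1) * (real n + 1 - real k) + real ((t + 1) div 2)"
    using assms(1) by (auto simp: reach_inv_def x)
  have at_le: "real ((Suc t + 1) div 2) \<le> real ((t + 1) div 2) + 1" by auto
  from set_red_step[OF assms(2)] show ?thesis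
  proof
    assume y: "y = red_fail (Suc t) x"
    show ?thesis
    proof (cases "odd (Suc t)")
      case True
      then have "real ((Suc t + 1) div 2) = real ((t + 1) div 2) + 1" by auto
      then show ?thesis using h True unfolding y reach_inv_def x red_fail_eq
        by (simp del: of_nat_Suc)
    next
      case False
      then have "real ((Suc t + 1) div 2) = real ((t + 1) div 2)" by auto
      then show ?thesis using h False unfolding y reach_inv_def x red_fail_eq
        by (simp del: of_nat_Suc)
    qed
  next
    assume "fst x \<ge> 1 \<and> y = red_succ \<delta> (Suc t) x"
    moreover define kp' where "kp' = max (kp - \<delta>) (\<delta> + 1)"
    ultimately have n1: "n \<ge> 1" and y: "y = (n - 1, sg + 1, kp')"
      by (auto simp: x red_succ_eq)
    have kp': "kp - \<delta> \<le> kp'" "\<delta> + 1 \<le> kp'" by (simp_all add: kp'_def)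
    have "Suc (k - n) = Suc k - n" using h(1) by (simp add: Suc_diff_le)
    moreover have "real (n - 1) = real n - 1" using n1 by simp
    ultimately show ?thesis using h at_le n1 kp' unfolding y reach_inv_def
      by (simp del: of_nat_Suc add: algebra_simps)
  qed
qed

lemma reach_inv_run:
  assumes "\<delta> \<ge> 0" "x \<in> set_pmf (red_run \<delta> k t)"
  shows "reach_inv \<delta> k t x"
  using assms(2)
proof (induction t arbitrary: x)
  case 0
  then show ?case by (simp add: reach_inv_def)
qed (auto intro: reach_inv_step[OF _ _ assms(1)])

lemma reach_inv_kappa_lower:
  assumes "reach_inv \<delta> k T x"
  shows "snd (snd x) \<ge> (\<delta> + 1) * (real (fst x) + 1 - real k) + real T / 2"
proof -
  have "real T \<le> 2 * real ((T + 1) div 2)" by linarith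
  then show ?thesis using assms unfolding reach_inv_def by linarith
qed
lemma potential_expectation_le:
  fixes F :: "nat \<Rightarrow> nat \<times> lstate \<Rightarrow> real"
  assumes nonneg: "\<And>t x. 0 \<le> F t x" and eps: "\<epsilon> \<ge> 0" and d: "\<delta> \<ge> 0"
    and step: "\<And>t x. reach_inv \<delta> k t x \<Longrightarrow> next_exp \<delta> t F x \<le> F t x + \<epsilon>"
  shows "(\<integral>\<^sup>+y. ennreal (F T y) \<partial>red_run \<delta> k T) \<le> ennreal (F 0 (k, 0, \<delta> + 1) + real T * \<epsilon>)"
proof (induction T)
  case (Suc T)
  have "(\<integral>\<^sup>+y. ennreal (F (Suc T) y) \<partial>red_run \<delta> k (Suc T))
        = (\<integral>\<^sup>+x. (\<integral>\<^sup>+y. ennreal (F (Suc T) y) \<partial>red_step \<delta> (Suc T) x) \<partial>red_run \<delta> k T)"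
    by simp
  also have "\<dots> \<le> (\<integral>\<^sup>+x. ennreal (F T x) + ennreal \<epsilon> \<partial>red_run \<delta> k T)"
  proof (rule nn_integral_mono_AE, subst AE_measure_pmf_iff, intro ballI)
    fix x assume "x \<in> set_pmf (red_run \<delta> k T)"
    then have r: "reach_inv \<delta> k T x" using reach_inv_run[OF d] by blast
    then have "snd (snd x) \<ge> 1" using d by (auto simp: reach_inv_def)
    then have "(\<integral>\<^sup>+y. ennreal (F (Suc T) y) \<partial>red_step \<delta> (Suc T) x) = ennreal (next_exp \<delta> T F x)"
      using nn_integral_red_step nonneg by blast
    also have "\<dots> \<le> ennreal (F T x + \<epsilon>)" using step[OF r] by (rule ennreal_leI)
    also have "\<dots> = ennreal (F T x) + ennreal \<epsilon>" using nonneg eps by (intro ennreal_plus) auto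
    finally show "(\<integral>\<^sup>+y. ennreal (F (Suc T) y) \<partial>red_step \<delta> (Suc T) x) \<le> ennreal (F T x) + ennreal \<epsilon>" .
  qed
  also have "\<dots> = (\<integral>\<^sup>+x. ennreal (F T x) \<partial>red_run \<delta> k T) + ennreal \<epsilon>"
    by (subst nn_integral_add) (simp_all add: measure_pmf.emeasure_space_1)
  also have "\<dots> \<le> ennreal (F 0 (k, 0, \<delta> + 1) + real T * \<epsilon>) + ennreal \<epsilon>"
    using Suc by (intro add_right_mono)
  also have "\<dots> = ennreal (F 0 (k, 0, \<delta> + 1) + real T * \<epsilon> + \<epsilon>)"
    using nonneg[of 0] eps by (intro ennreal_plus[symmetric]) auto
  also have "F 0 (k, 0, \<delta> + 1) + real T * \<epsilon> + \<epsilon> = F 0 (k, 0, \<delta> + 1) + real (Suc T) * \<epsilon>"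
    by (simp add: algebra_simps)
  finally show ?case .
qed (use nonneg in simp)

text \<open>Markov's inequality applied to the potential: if F T is at least M at every reachable
  state in which some message is still undelivered, the process is finished with
  probability at least  1 - (F 0 start + T eps) / M.\<close>
lemma prob_done_potential:
  fixes F :: "nat \<Rightarrow> nat \<times> lstate \<Rightarrow> real"
  assumes nonneg: "\<And>t x. 0 \<le> F t x" and eps: "\<epsilon> \<ge> 0" and d: "\<delta> \<ge> 0"
    and step: "\<And>t x. reach_inv \<delta> k t x \<Longrightarrow> next_exp \<delta> t F x \<le> F t x + \<epsilon>"
    and M: "M > 0"
    and big: "\<And>x. reach_inv \<delta> k T x \<Longrightarrow> fst x \<noteq> 0 \<Longrightarrow> F T x \<ge> M"
  shows "measure_pmf.prob (red_run \<delta> k T) {x. fst x = 0} \<ge> 1 - (F 0 (k, 0, \<delta> + 1) + real T * \<epsilon>) / M"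
proof -
  let ?R = "red_run \<delta> k T"
  let ?B = "F 0 (k, 0, \<delta> + 1) + real T * \<epsilon>"
  have B0: "0 \<le> ?B" using nonneg[of 0] eps by simp
  have "emeasure ?R {x. fst x \<noteq> 0} = (\<integral>\<^sup>+y. indicator {x. fst x \<noteq> 0} y \<partial>?R)" by simp
  also have "\<dots> \<le> (\<integral>\<^sup>+y. ennreal (F T y) / ennreal M \<partial>?R)"
  proof (rule nn_integral_mono_AE, subst AE_measure_pmf_iff, intro ballI)
    fix y assume "y \<in> set_pmf ?R"
    then have r: "reach_inv \<delta> k T y" using reach_inv_run[OF d] by blast
    show "indicator {x. fst x \<noteq> 0} y \<le> ennreal (F T y) / ennreal M"
    proof (cases "fst y = 0")
      case False
      then have "1 \<le> F T y / M" using big[OF r] M by simp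
      then have "indicator {x. fst x \<noteq> 0} y \<le> ennreal (F T y / M)" using False by (simp add: ennreal_leI)
      also have "\<dots> = ennreal (F T y) / ennreal M" using M nonneg by (simp add: divide_ennreal)
      finally show ?thesis .
    qed simp
  qed
  also have "\<dots> = (\<integral>\<^sup>+y. ennreal (F T y) \<partial>?R) / ennreal M"
    by (rule nn_integral_divide) simp
  also have "\<dots> \<le> ennreal ?B / ennreal M"
    by (intro divide_right_mono_ennreal potential_expectation_le[OF nonneg eps d step])
  also have "\<dots> = ennreal (?B / M)" using M B0 by (intro divide_ennreal) auto
  finally have "measure_pmf.prob ?R {x. fst x \<noteq> 0} \<le> ?B / M"
    using M B0 by (simp add: measure_pmf.emeasure_eq_measure ennreal_le_iff)
  moreover have "measure_pmf.prob ?R {x. fst x = 0} = 1 - measure_pmf.prob ?R {x. fst x \<noteq> 0}"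
    using measure_pmf.prob_compl[of "{x. fst x \<noteq> 0}" ?R]
    by (simp add: Compl_eq_Diff_UNIV[symmetric] Compl_eq)
  ultimately show ?thesis by simp
qed

text \<open>Once all messages are delivered the chain stays finished, so the probability of
  being finished is monotone in time.\<close>
lemma prob_done_mono:
  assumes "t \<le> t'"
  shows "measure_pmf.prob (red_run \<delta> k t) {x. fst x = 0} \<le> measure_pmf.prob (red_run \<delta> k t') {x. fst x = 0}"
  using assms
proof (induction t' rule: dec_induct)
  case (step t')
  let ?A = "{x::nat \<times> lstate. fst x = 0}"
  have "emeasure (red_run \<delta> k t') ?A = (\<integral>\<^sup>+x. indicator ?A x \<partial>red_run \<delta> k t')" by simp
  also have "\<dots> \<le> (\<integral>\<^sup>+x. emeasure (red_step \<delta> (Suc t') x) ?A \<partial>red_run \<delta> k t')"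
  proof (rule nn_integral_mono)
    fix x :: "nat \<times> lstate"
    show "indicator ?A x \<le> emeasure (red_step \<delta> (Suc t') x) ?A"
    proof (cases "fst x = 0")
      case True
      then have "\<forall>y \<in> set_pmf (red_step \<delta> (Suc t') x). fst y = 0"
        using set_red_step[of _ \<delta> "Suc t'" x] by (auto simp: red_fail_def)
      then have "emeasure (red_step \<delta> (Suc t') x) ?A = 1"
        by (subst measure_pmf.emeasure_eq_1_AE) (auto simp: AE_measure_pmf_iff)
      then show ?thesis by (simp add: True)
    qed simp
  qed
  also have "\<dots> = emeasure (red_run \<delta> k (Suc t')) ?A" by simp
  finally show ?case using step.IH by (simp add: measure_pmf.emeasure_eq_measure)
qed simp

lemma weighted_avg_mono:
  fixes q qm a b :: real
  assumes "0 \<le> qm" "qm \<le> q" "q \<le> 1" "a \<le> b"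
  shows "q * a + (1 - q) * b \<le> qm * a + (1 - qm) * b"
proof -
  have "q * a + (1 - q) * b = b - q * (b - a)" by (simp add: algebra_simps)
  also have "\<dots> \<le> b - qm * (b - a)" using assms by (intro diff_left_mono mult_right_mono) auto
  also have "\<dots> = qm * a + (1 - qm) * b" by (simp add: algebra_simps)
  finally show ?thesis .
qed

lemma weighted_avg_le:
  fixes q S Fv B :: real
  assumes "0 \<le> q" "q \<le> 1" "S \<le> B" "Fv \<le> B"
  shows "q * S + (1 - q) * Fv \<le> B"
proof -
  have "q * S + (1 - q) * Fv \<le> q * B + (1 - q) * B"
    using assms by (intro add_mono mult_left_mono) auto
  then show ?thesis by (simp add: algebra_simps)
qed

lemma exp_le_one_plus_double: "0 \<le> x \<Longrightarrow> x \<le> 1 \<Longrightarrow> exp x \<le> 1 + 2 * (x::real)"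
proof -
  assume a: "0 \<le> x" "x \<le> 1"
  have "exp x \<le> 1 + x + x\<^sup>2" using exp_bound a by blast
  also have "x\<^sup>2 \<le> x" using a by (simp add: power2_eq_square mult_left_le)
  finally show ?thesis by simp
qed

lemma exp_neg_le_inv: fixes y :: real shows "0 \<le> y \<Longrightarrow> exp (- y) \<le> 1 / (1 + y)"
proof -
  assume "0 \<le> y"
  have "1 + y \<le> exp y" by simp
  then have "1 / exp y \<le> 1 / (1 + y)" using \<open>0 \<le> y\<close> by (intro divide_left_mono) auto
  then show ?thesis by (simp add: exp_minus field_simps)
qed

lemma exp_neg_half: fixes y :: real shows "0 \<le> y \<Longrightarrow> y \<le> 1 \<Longrightarrow> exp (- y) \<le> 1 - y / 2"
proof -
  assume a: "0 \<le> y" "y \<le> 1"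
  have yy: "y * y \<le> y" using a by (simp add: mult_left_le)
  have "(1 + y) * (1 - y / 2) = 1 + (y - y * y) / 2" by (simp add: field_simps)
  also have "\<dots> \<ge> 1" using yy by simp
  finally have "1 \<le> (1 + y) * (1 - y / 2)" .
  then have "1 / (1 + y) \<le> 1 - y / 2"
    using a by (simp add: divide_le_eq mult.commute)
  then show ?thesis using exp_neg_le_inv[OF a(1)] by linarith
qed

lemma exp_neg_quad: fixes y :: real shows "0 \<le> y \<Longrightarrow> exp (- y) \<le> 1 - y + y\<^sup>2"
proof -
  assume a: "0 \<le> y"
  have "1 / (1 + y) \<le> 1 - y + y\<^sup>2"
  proof -
    have "(1 + y) * (1 - y + y\<^sup>2) = 1 + y ^ 3" by (simp add: algebra_simps power2_eq_square power3_eq_cube)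
    also have "\<dots> \<ge> 1" using a by simp
    finally show ?thesis using a by (simp add: divide_le_eq mult.commute)
  qed
  then show ?thesis using exp_neg_le_inv[OF a] by linarith
qed

text \<open>Drift inequality behind the final-phase potential: a step that decreases the
  exponent by 4/qm with probability qm and otherwise increases it by 1 is a supermartingale
  step for exp(lam * .), provided lam \<le> qm/4.\<close>
lemma exp_drift_bt:
  fixes qm lam E :: real
  assumes "0 < qm" "qm \<le> 1" "0 < lam" "lam \<le> qm / 4"
  shows "qm * exp (lam * (E - 4 / qm)) + (1 - qm) * exp (lam * (E + 1)) \<le> exp (lam * E)"
proof -
  have y: "0 \<le> lam * (4 / qm)" "lam * (4 / qm) \<le> 1"
    using assms by (auto simp: field_simps)
  have e1: "exp (- (lam * (4 / qm))) \<le> 1 - lam * (4 / qm) / 2" by (rule exp_neg_half[OF y])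
  have e2: "exp lam \<le> 1 + 2 * lam" using assms by (intro exp_le_one_plus_double) auto
  have "qm * exp (lam * (E - 4 / qm)) + (1 - qm) * exp (lam * (E + 1)) =
        exp (lam * E) * (qm * exp (- (lam * (4 / qm))) + (1 - qm) * exp lam)"
    by (simp add: algebra_simps exp_add[symmetric] exp_diff)
  also have "qm * exp (- (lam * (4 / qm))) + (1 - qm) * exp lam \<le> qm * (1 - lam * (4 / qm) / 2) + (1 - qm) * (1 + 2 * lam)"
    using assms e1 e2 by (intro add_mono mult_left_mono) auto
  also have "\<dots> = 1 - 2 * lam * qm" using assms by (simp add: field_simps)
  also have "\<dots> \<le> 1" using assms by simp
  finally show ?thesis by simp
qed

text \<open>Drift inequality behind the main-phase potential: decrease by d - 1 with probability
  r0, increase by 1 otherwise; it needs the positive drift r0 d > 1, which is where the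
  hypothesis delta > e enters.\<close>
lemma exp_drift_at:
  fixes r0 d lam :: real
  assumes "0 \<le> r0" "r0 \<le> 1" "d \<ge> 1" "r0 * d > 1" "0 < lam" "lam \<le> 1" "lam \<le> (r0 * d - 1) / d\<^sup>2"
  shows "r0 * exp (- (lam * (d - 1))) + (1 - r0) * exp lam \<le> 1"
proof -
  have e1: "exp (- (lam * (d - 1))) \<le> 1 - lam * (d - 1) + (lam * (d - 1))\<^sup>2"
    using assms by (intro exp_neg_quad) auto
  have e2: "exp lam \<le> 1 + lam + lam\<^sup>2" using assms exp_bound by auto
  have "r0 * exp (- (lam * (d - 1))) + (1 - r0) * exp lam \<le>
      r0 * (1 - lam * (d - 1) + (lam * (d - 1))\<^sup>2) + (1 - r0) * (1 + lam + lam\<^sup>2)"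
    using assms e1 e2 by (intro add_mono mult_left_mono) auto
  also have "\<dots> = 1 + lam * (1 - r0 * d) + lam\<^sup>2 * (r0 * (d - 1)\<^sup>2 + (1 - r0))"
    by (simp add: algebra_simps power2_eq_square)
  finally have X: "r0 * exp (- (lam * (d - 1))) + (1 - r0) * exp lam \<le> 1 + lam * (1 - r0 * d) + lam\<^sup>2 * (r0 * (d - 1)\<^sup>2 + (1 - r0))" .
  have Z: "r0 * (d - 1)\<^sup>2 + (1 - r0) \<le> d\<^sup>2"
  proof -
    have "r0 * (d - 1)\<^sup>2 + (1 - r0) \<le> (d - 1)\<^sup>2 + 1"
      using assms by (smt (verit) mult_left_le_one_le zero_le_power2)
    also have "\<dots> \<le> d\<^sup>2" using assms by (simp add: power2_eq_square algebra_simps)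
    finally show ?thesis .
  qed
  have Y1: "lam\<^sup>2 * (r0 * (d - 1)\<^sup>2 + (1 - r0)) \<le> lam\<^sup>2 * d\<^sup>2"
    using Z by (intro mult_left_mono) auto
  have "lam\<^sup>2 * d\<^sup>2 = lam * (lam * d\<^sup>2)" by (simp add: power2_eq_square)
  also have "lam * (lam * d\<^sup>2) \<le> lam * (r0 * d - 1)"
    using assms by (intro mult_left_mono) (auto simp: field_simps)
  finally have Y2: "lam\<^sup>2 * d\<^sup>2 \<le> lam * (r0 * d - 1)" .
  have "1 + lam * (1 - r0 * d) + lam * (r0 * d - 1) = 1" by (simp add: algebra_simps)
  then show ?thesis using X Y1 Y2 by linarith
qed
text \<open>(1 - 1/kappa)^(n-1) \<ge> 1/e when n \<le> kappa: an AT-step with at most kappa~ active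
  nodes succeeds with probability at least n/(e kappa~).\<close>
lemma one_minus_inv_pow_ge:
  fixes kp :: real and n :: nat
  assumes "1 \<le> n" "real n \<le> kp" "1 < kp"
  shows "(1 - 1 / kp) ^ (n - 1) \<ge> exp (- 1)"
proof -
  define b where "b = 1 - 1 / kp"
  have b0: "0 < b" "b < 1" using assms by (auto simp: b_def field_simps)
  have "b ^ (n - 1) = b powr real (n - 1)" using b0 by (simp add: powr_realpow)
  also have "\<dots> \<ge> b powr (kp - 1)"
    using assms b0 by (intro powr_mono') (auto simp: of_nat_diff)
  also have "b powr (kp - 1) = exp ((kp - 1) * ln b)" using b0 by (simp add: powr_def)
  also have "(kp - 1) * ln b \<ge> -1"
  proof -
    have "b = 1 / (1 + 1 / (kp - 1))" using assms by (simp add: b_def field_simps)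
    then have "ln b = - ln (1 + 1 / (kp - 1))" using assms by (simp add: ln_div)
    moreover have "ln (1 + 1 / (kp - 1)) \<le> 1 / (kp - 1)" using assms by (intro ln_add_one_self_le_self) auto
    ultimately have "ln b \<ge> - (1 / (kp - 1))" by linarith
    then have "(kp - 1) * ln b \<ge> (kp - 1) * (- (1 / (kp - 1)))" using assms by (intro mult_left_mono) auto
    then show ?thesis using assms by simp
  qed
  then have "exp ((kp - 1) * ln b) \<ge> exp (- 1)" by simp
  finally show ?thesis by (simp add: b_def)
qed

text \<open>Raising kappa by one multiplies (kappa/k1)^gam by at most exp(gam/kappa), which a success
  probability of at least gam/kappa compensates.\<close>
lemma powr_growth_step:
  fixes kp k1 gam q :: real
  assumes "1 \<le> kp" "0 < k1" "0 \<le> gam" "gam / kp \<le> q" "q \<le> 1"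
  shows "(1 - q) * ((kp + 1) / k1) powr gam \<le> (kp / k1) powr gam"
proof -
  have "(kp + 1) / k1 = (kp / k1) * (1 + 1 / kp)" using assms by (simp add: field_simps)
  moreover have "((kp / k1) * (1 + 1 / kp)) powr gam = (kp / k1) powr gam * (1 + 1 / kp) powr gam"
    by (rule powr_mult)
  ultimately have "((kp + 1) / k1) powr gam = (kp / k1) powr gam * (1 + 1 / kp) powr gam"
    by metis
  also have "(1 + 1 / kp) powr gam \<le> exp (gam / kp)"
  proof -
    have "0 < 1 / kp" using assms by simp
    then have "0 < 1 + 1 / kp" by linarith
    then have "(1 + 1 / kp) powr gam = exp (gam * ln (1 + 1 / kp))" by (simp add: powr_def)
    also have "\<dots> \<le> exp (gam * (1 / kp))"
      unfolding exp_le_cancel_iff using assms by (intro mult_left_mono ln_add_one_self_le_self) auto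
    finally show ?thesis by simp
  qed
  then have "(kp / k1) powr gam * (1 + 1 / kp) powr gam \<le> (kp / k1) powr gam * exp (gam / kp)"
    by (intro mult_left_mono) auto
  finally have A: "((kp + 1) / k1) powr gam \<le> (kp / k1) powr gam * exp (gam / kp)" .
  have B: "(1 - q) * exp (gam / kp) \<le> 1"
  proof -
    have "(1 - q) * exp (gam / kp) \<le> (1 - gam / kp) * exp (gam / kp)"
      using assms by (intro mult_right_mono) auto
    also have "\<dots> \<le> exp (- (gam / kp)) * exp (gam / kp)"
      using exp_minus_ge[of "gam / kp"] by (intro mult_right_mono) auto
    also have "\<dots> = 1" by (simp add: exp_minus field_simps)
    finally show ?thesis .
  qed
  have "(1 - q) * ((kp + 1) / k1) powr gam \<le> (1 - q) * ((kp / k1) powr gam * exp (gam / kp))"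
    using A assms by (intro mult_left_mono) auto
  also have "\<dots> = (kp / k1) powr gam * ((1 - q) * exp (gam / kp))" by simp
  also have "\<dots> \<le> (kp / k1) powr gam * 1" using B by (intro mult_left_mono) auto
  finally show ?thesis by simp
qed

lemma exp_ge_cap:
  fixes lam M E :: real
  assumes "0 < lam" "0 < M" "ln M / lam \<le> E"
  shows "M \<le> exp (lam * E)"
proof -
  have "ln M \<le> lam * E" using assms by (simp add: pos_divide_le_eq mult.commute)
  then show ?thesis using assms(2) by (metis exp_le_cancel_iff exp_ln)
qed

lemma succ_prob_at:
  assumes "odd s" "1 \<le> n" "real n \<le> kp" "1 < kp"
  shows "succ_prob s n (sg, kp) \<ge> (real n / kp) * exp (- 1)"
proof -
  have "succ_prob s n (sg, kp) = (real n / kp) * (1 - 1 / kp) ^ (n - 1)"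
    using assms by (simp add: succ_prob_def txprob_def)
  also have "\<dots> \<ge> (real n / kp) * exp (- 1)"
    using one_minus_inv_pow_ge[OF assms(2-4)] assms by (intro mult_left_mono) auto
  finally show ?thesis .
qed

lemma succ_prob_at_first:
  assumes "odd s" "1 \<le> n" "\<delta> + 1 \<le> kp" "0 < \<delta>"
  shows "succ_prob s n (sg, kp) \<ge> (1 / kp) * (\<delta> / (\<delta> + 1)) ^ (n - 1)"
proof -
  have kp: "0 < kp" using assms by simp
  have b: "\<delta> / (\<delta> + 1) \<le> 1 - 1 / kp"
  proof -
    have "1 / kp \<le> 1 / (\<delta> + 1)" using assms by (intro divide_left_mono) auto
    moreover have "\<delta> / (\<delta> + 1) = 1 - 1 / (\<delta> + 1)" using assms by (simp add: field_simps)
    ultimately show ?thesis by simp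
  qed
  have "succ_prob s n (sg, kp) = real n * (1 / kp) * (1 - 1 / kp) ^ (n - 1)"
    using assms by (simp add: succ_prob_def txprob_def)
  also have "\<dots> \<ge> 1 * (1 / kp) * (\<delta> / (\<delta> + 1)) ^ (n - 1)"
    using assms kp b by (intro mult_mono power_mono) auto
  finally show ?thesis by simp
qed

text \<open>Before the first success (sigma = 0) every node transmits in BT-steps, so with two or
  more active nodes BT-steps always collide.\<close>
lemma succ_prob_bt_blocked:
  assumes "even s" "2 \<le> n"
  shows "succ_prob s n (0, kp) = 0"
  using assms by (simp add: succ_prob_def txprob_def)

text \<open>BT-step after at least k - N successes, with 1 \<le> n \<le> N < k: the transmission
  probability lies between 1/(1 + log k) and 1/(1 + log (k - N + 1)).\<close>
lemma succ_prob_bt: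
  assumes "even s" "1 \<le> n" "n \<le> N" "N < k" "sg = k - n"
  shows "succ_prob s n (sg, kp) \<ge> (1 / (1 + log 2 (real k))) * (1 - 1 / (1 + log 2 (real (k - N + 1)))) ^ N"
proof -
  define p where "p = 1 / (1 + log 2 (real sg + 1))"
  have sg1: "real sg + 1 \<le> real k" "real (k - N + 1) \<le> real sg + 1" "2 \<le> real (k - N + 1)"
    using assms by auto
  have l1: "log 2 (real sg + 1) \<le> log 2 (real k)" using sg1 by (intro log_le_cancel_iff[THEN iffD2]) auto
  have l2: "log 2 (real (k - N + 1)) \<le> log 2 (real sg + 1)" using sg1 by (intro log_le_cancel_iff[THEN iffD2]) auto
  have l3: "1 \<le> log 2 (real (k - N + 1))" using sg1 by (simp add: le_log_iff)
  have l4: "1 \<le> log 2 (real sg + 1)" "1 \<le> log 2 (real k)" using l1 l2 l3 by linarith+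
  have pp: "0 < (1 + log 2 (real k)) * (1 + log 2 (real sg + 1))" using l4 by (intro mult_pos_pos) linarith+
  have plo: "1 / (1 + log 2 (real k)) \<le> p" unfolding p_def using l1 l4 pp by (intro divide_left_mono) auto
  have pp2: "0 < (1 + log 2 (real sg + 1)) * (1 + log 2 (real (k - N + 1)))" using l4 l3 by (intro mult_pos_pos) linarith+
  have phi: "p \<le> 1 / (1 + log 2 (real (k - N + 1)))" unfolding p_def using l2 l3 l4 pp2 by (intro divide_left_mono) linarith+
  have aux: "\<And>x::real. 1 \<le> x \<Longrightarrow> 1 / (1 + x) \<le> 1" by (simp add: divide_le_eq)
  have aux0: "\<And>x::real. 1 \<le> x \<Longrightarrow> 0 \<le> 1 / (1 + x)" by simp
  have phi2: "1 / (1 + log 2 (real (k - N + 1))) \<le> 1" using aux[OF l3] .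
  have p0: "0 \<le> p" unfolding p_def using aux0[OF l4(1)] .
  have "succ_prob s n (sg, kp) = real n * p * (1 - p) ^ (n - 1)"
    using assms by (simp add: succ_prob_def txprob_def p_def)
  also have "\<dots> \<ge> 1 * p * (1 - p) ^ N"
  proof (intro mult_mono)
    show "(1 - p) ^ N \<le> (1 - p) ^ (n - 1)"
      using p0 phi phi2 assms by (intro power_decreasing) auto
  qed (use assms p0 phi phi2 in auto)
  also have "1 * p * (1 - p) ^ N \<ge> (1 / (1 + log 2 (real k))) * (1 - 1 / (1 + log 2 (real (k - N + 1)))) ^ N"
    using plo phi phi2 p0 l1 l3 by (intro mult_mono power_mono) auto
  finally show ?thesis by linarith
qed

section \<open>Potentials and their one-step drift\<close>

text \<open>All potentials are capped at a level M (the Markov threshold), so only the regime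
  below the cap needs a genuine drift estimate.  Each lemma below bounds the expected
  potential after one step from a state with n active nodes and estimate kp, where
  q is the success probability, S the potential after a success and Fv after a failure.\<close>

text \<open>Final phase (at most m active nodes, driven by BT-steps): every two steps kappa~ grows
  by one, while a success, which happens in BT-steps with probability at least qm, lowers
  the exponent by g = 4/qm.  The parity term makes the potential invariant across AT-steps.\<close>
definition pot_final :: "real \<Rightarrow> real \<Rightarrow> real \<Rightarrow> real \<Rightarrow> nat \<Rightarrow> nat \<Rightarrow> real \<Rightarrow> real" where
  "pot_final lam g Dl M t n kp = min (exp (lam * (kp + (1 + g) * real n - Dl - (if odd t then 1 else 0)))) M"

lemma pot_final_step:
  fixes q S Fv :: real
  assumes n1: "1 \<le> n" and kp: "\<delta> + 1 \<le> kp" and d: "0 \<le> \<delta>" and M: "0 < M"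
    and qm: "0 < qm" "qm \<le> 1" and g: "g = 4 / qm" and lam: "0 < lam" "lam \<le> qm / 4"
    and q: "0 \<le> q" "q \<le> 1" and qbt: "even (Suc t) \<Longrightarrow> qm \<le> q"
    and S: "0 \<le> S" "S \<le> pot_final lam g Dl M (Suc t) (n - 1) (max (kp - \<delta>) (\<delta> + 1))"
    and Fv: "Fv = pot_final lam g Dl M (Suc t) n (kp + (if odd (Suc t) then 1 else 0))"
  shows "q * S + (1 - q) * Fv \<le> pot_final lam g Dl M t n kp"
proof -
  have g0: "0 \<le> g" using g qm by simp
  have kk: "max (kp - \<delta>) (\<delta> + 1) \<le> kp" using kp d by simp
  have nn: "real (n - 1) = real n - 1" using n1 by simp
  show ?thesis
  proof (cases "odd (Suc t)")
    case True
    then have et: "\<not> odd t" by simp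
    have "Fv = pot_final lam g Dl M t n kp" using True et by (simp add: Fv pot_final_def algebra_simps)
    moreover have "S \<le> pot_final lam g Dl M t n kp"
    proof -
      have "lam * (max (kp - \<delta>) (\<delta> + 1) + (1 + g) * real (n - 1) - Dl - 1) \<le> lam * (kp + (1 + g) * real n - Dl - 0)"
        using kk g0 lam nn by (intro mult_left_mono) (auto simp: algebra_simps)
      then have "pot_final lam g Dl M (Suc t) (n - 1) (max (kp - \<delta>) (\<delta> + 1)) \<le> pot_final lam g Dl M t n kp"
        using True et unfolding pot_final_def by (intro min.mono) auto
      then show ?thesis using S by linarith
    qed
    ultimately show ?thesis using q S by (intro weighted_avg_le) auto
  next
    case False
    then have ot: "odd t" by simp
    define E where "E = kp + (1 + g) * real n - Dl - 1"
    have cur: "pot_final lam g Dl M t n kp = min (exp (lam * E)) M" using ot by (simp add: pot_final_def E_def)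
    have fv: "Fv = min (exp (lam * (E + 1))) M" using False by (simp add: Fv pot_final_def E_def algebra_simps)
    have sv: "S \<le> min (exp (lam * (E - g))) M"
    proof -
      have "lam * (max (kp - \<delta>) (\<delta> + 1) + (1 + g) * real (n - 1) - Dl - 0) \<le> lam * (E - g)"
        using kk g0 lam nn by (intro mult_left_mono) (auto simp: algebra_simps E_def)
      then have "pot_final lam g Dl M (Suc t) (n - 1) (max (kp - \<delta>) (\<delta> + 1)) \<le> min (exp (lam * (E - g))) M"
        using False unfolding pot_final_def by (intro min.mono) auto
      then show ?thesis using S by linarith
    qed
    show ?thesis
    proof (cases "exp (lam * E) \<le> M")
      case False
      then have "pot_final lam g Dl M t n kp = M" using cur by simp
      then show ?thesis using fv sv q S by (intro weighted_avg_le) auto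
    next
      case True
      have "q * S + (1 - q) * Fv \<le> q * exp (lam * (E - g)) + (1 - q) * exp (lam * (E + 1))"
        using sv fv q by (intro add_mono mult_left_mono) auto
      also have "\<dots> \<le> qm * exp (lam * (E - g)) + (1 - qm) * exp (lam * (E + 1))"
      proof (rule weighted_avg_mono)
        show "exp (lam * (E - g)) \<le> exp (lam * (E + 1))" using lam g0 by (simp add: mult_left_mono)
      qed (use qm q qbt False in auto)
      also have "\<dots> \<le> exp (lam * E)" unfolding g by (rule exp_drift_bt) (use qm lam in auto)
      also have "\<dots> = pot_final lam g Dl M t n kp" using cur True by simp
      finally show ?thesis .
    qed
  qed
qed

text \<open>Main phase (more than m active nodes, driven by AT-steps): the potential measures how far
  kappa~ exceeds the number n of active nodes.  It may grow by exp lam per step, which costs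
  only T exp lam overall; its essential property is that once kappa~ \<ge> n the AT-steps succeed
  often enough to pull kappa~ back.\<close>
definition pot_main :: "real \<Rightarrow> real \<Rightarrow> nat \<Rightarrow> real \<Rightarrow> real" where
  "pot_main lam M n kp = min (exp (lam * (kp - real n))) M + 1"

lemma pot_main_mono:
  assumes "0 \<le> lam" "kp' - real n' \<le> kp - real n"
  shows "pot_main lam M n' kp' \<le> pot_main lam M n kp"
  using assms unfolding pot_main_def by (intro add_right_mono min.mono) (auto intro: mult_left_mono)

text \<open>Below the cap kappa~ exceeds n by at most W = ln M / lam, so the AT-probability 1/kappa~
  is at least about 1/n, and n nodes succeed with probability about n/(e kappa~).\<close>
lemma succ_prob_main_phase:
  assumes s: "odd s" and n: "m < n" "real n \<le> kp" and m: "1 \<le> m"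
    and lam: "0 < lam" and M: "1 \<le> M" and cap: "exp (lam * (kp - real n)) \<le> M"
    and rho: "r0 * exp 1 \<le> real m / (real m + ln M / lam)"
  shows "r0 \<le> succ_prob s n (sg, kp)"
proof -
  define W where "W = ln M / lam"
  have W0: "0 \<le> W" using M lam by (simp add: W_def)
  have "lam * (kp - real n) \<le> ln M" using cap M by (metis exp_le_cancel_iff exp_ln less_le_trans zero_less_one)
  then have "kp - real n \<le> W" using lam by (simp add: W_def pos_le_divide_eq mult.commute)
  then have kpW: "kp \<le> real n + W" by simp
  have kp1: "1 < kp" using n m by linarith
  have "r0 = (r0 * exp 1) * exp (- 1)" by (simp add: exp_minus)
  also have "\<dots> \<le> real m / (real m + W) * exp (- 1)" using rho by (intro mult_right_mono) (auto simp: W_def)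
  also have "real m / (real m + W) \<le> real n / (real n + W)"
  proof -
    have "real m * W \<le> real n * W" using n W0 by (intro mult_right_mono) auto
    then show ?thesis using n m W0 by (simp add: divide_simps algebra_simps)
  qed
  also have "real n / (real n + W) \<le> real n / kp"
    using kpW kp1 by (intro divide_left_mono) auto
  also have "real n / kp * exp (- 1) \<le> succ_prob s n (sg, kp)"
    using succ_prob_at[OF s _ n(2) kp1] n by simp
  finally show ?thesis by simp
qed

lemma pot_main_step:
  fixes q S Fv :: real
  assumes n: "m < n" and m: "2 * \<delta> + 2 \<le> real m" and kp: "\<delta> + 1 \<le> kp" and d: "1 \<le> \<delta>"
    and M: "1 \<le> M" and lam: "0 < lam"
    and r0: "0 \<le> r0" "r0 * exp (- (lam * (\<delta> - 1))) + (1 - r0) * exp lam \<le> 1"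
    and rho: "r0 * exp 1 \<le> real m / (real m + ln M / lam)"
    and q: "q = succ_prob (Suc t) n (sg, kp)"
    and S: "0 \<le> S" "S \<le> pot_main lam M (n - 1) (max (kp - \<delta>) (\<delta> + 1))"
    and Fv: "Fv = pot_main lam M n (kp + (if odd (Suc t) then 1 else 0))"
  shows "q * S + (1 - q) * Fv \<le> pot_main lam M n kp + exp lam"
proof -
  have q01: "0 \<le> q" "q \<le> 1" using succ_prob_bounds[of "(sg, kp)"] q kp d by auto
  have nn: "real (n - 1) = real n - 1" using n by simp
  have e0: "0 < exp lam" by simp
  show ?thesis
  proof (cases "kp < real n")
    case True
    have "pot_main lam M (n - 1) (max (kp - \<delta>) (\<delta> + 1)) \<le> exp lam + 1"
         "Fv \<le> exp lam + 1"
      using True nn lam d kp unfolding Fv pot_main_def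
      by (auto intro!: add_right_mono min.coboundedI1 mult_left_le_one_le simp: mult_le_cancel_left1)
    moreover have "1 \<le> pot_main lam M n kp" using M by (simp add: pot_main_def)
    ultimately show ?thesis using q01 S by (intro weighted_avg_le) auto
  next
    case False
    then have kpn: "real n \<le> kp" by simp
    have "max (kp - \<delta>) (\<delta> + 1) = kp - \<delta>" using kpn n m by simp
    moreover have "pot_main lam M (n - 1) (kp - \<delta>) \<le> pot_main lam M n kp"
      using nn d lam by (intro pot_main_mono) auto
    ultimately have S_le: "S \<le> pot_main lam M n kp" using S(2) by simp
    show ?thesis
    proof (cases "odd (Suc t) \<and> exp (lam * (kp - real n)) \<le> M")
      case False
      then have "Fv \<le> pot_main lam M n kp" unfolding Fv by (auto simp: pot_main_def)
      then have "S \<le> pot_main lam M n kp + exp lam" "Fv \<le> pot_main lam M n kp + exp lam"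
        using S_le e0 by linarith+
      then show ?thesis using q01 by (intro weighted_avg_le) auto
    next
      case True
      define Psi where "Psi = kp - real n"
      have cur: "pot_main lam M n kp = exp (lam * Psi) + 1" using True by (simp add: pot_main_def Psi_def)
      have sv: "S \<le> exp (lam * (Psi + 1 - \<delta>)) + 1"
        using S(2) \<open>max (kp - \<delta>) (\<delta> + 1) = kp - \<delta>\<close> nn by (simp add: pot_main_def Psi_def algebra_simps)
      have fv: "Fv \<le> exp (lam * (Psi + 1)) + 1" using True by (simp add: Fv pot_main_def Psi_def algebra_simps)
      have qr: "r0 \<le> q"
        unfolding q using True kpn n m d lam M rho by (intro succ_prob_main_phase) auto
      have "q * S + (1 - q) * Fv
            \<le> q * (exp (lam * (Psi + 1 - \<delta>)) + 1) + (1 - q) * (exp (lam * (Psi + 1)) + 1)"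
        using sv fv q01 by (intro add_mono mult_left_mono) auto
      also have "\<dots> = q * exp (lam * (Psi + 1 - \<delta>)) + (1 - q) * exp (lam * (Psi + 1)) + 1"
        by (simp add: algebra_simps)
      also have "\<dots> \<le> r0 * exp (lam * (Psi + 1 - \<delta>)) + (1 - r0) * exp (lam * (Psi + 1)) + 1"
        using r0 q01 qr lam d by (intro add_right_mono weighted_avg_mono) auto
      also have "r0 * exp (lam * (Psi + 1 - \<delta>)) + (1 - r0) * exp (lam * (Psi + 1))
                 = exp (lam * Psi) * (r0 * exp (- (lam * (\<delta> - 1))) + (1 - r0) * exp lam)"
        by (simp add: algebra_simps flip: exp_add)
      also have "\<dots> \<le> exp (lam * Psi)" using r0(2) by (simp add: mult_left_le)
      finally show ?thesis using cur e0 by linarith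
    qed
  qed
qed

text \<open>The final-phase potential with offset (2 + g) m lies below the main-phase potential
  at the phase boundary n = m, so the two glue into one potential.\<close>
lemma pot_final_le_main:
  assumes "0 < lam2" "lam2 \<le> lam1" "M \<ge> 0"
  shows "pot_final lam2 g ((2 + g) * real m) M t m kk \<le> pot_main lam1 M m kk"
proof -
  define z where "z = kk - real m"
  define pr :: real where "pr = (if odd t then 1 else 0)"
  have pr: "0 \<le> pr" by (simp add: pr_def)
  have e: "kk + (1 + g) * real m - (2 + g) * real m - pr = z - pr" by (simp add: z_def algebra_simps)
  have F: "pot_final lam2 g ((2 + g) * real m) M t m kk = min (exp (lam2 * (z - pr))) M"
    unfolding pot_final_def pr_def[symmetric] e by simp
  show ?thesis
  proof (cases "z \<le> 0")
    case True
    have "lam2 * (z - pr) \<le> 0" using True pr assms by (simp add: mult_nonneg_nonpos)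
    then have "exp (lam2 * (z - pr)) \<le> 1" by simp
    then have a: "min (exp (lam2 * (z - pr))) M \<le> 1" by (rule order_trans[OF min.cobounded1])
    have b: "0 \<le> min (exp (lam1 * z)) M" using assms by simp
    show ?thesis unfolding F pot_main_def z_def[symmetric] using a b by linarith
  next
    case False
    have "lam2 * (z - pr) \<le> lam1 * z"
    proof -
      have "lam2 * (z - pr) \<le> lam2 * z" using pr assms by (simp add: mult_left_mono)
      also have "\<dots> \<le> lam1 * z" using False assms by (intro mult_right_mono) auto
      finally show ?thesis .
    qed
    then have "exp (lam2 * (z - pr)) \<le> exp (lam1 * z)" by simp
    then have "min (exp (lam2 * (z - pr))) M \<le> min (exp (lam1 * z)) M" by (rule min.mono) simp
    then show ?thesis unfolding F pot_main_def z_def[symmetric] by simp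
  qed
qed

text \<open>First phase for small k: before the first success BT-steps always collide, and AT-steps
  succeed with probability at least gam/kappa~.  Hence M (kappa~/k1)^gam is a supermartingale,
  and it starts at M ((delta+1)/k1)^gam, which is small when k1 is large.\<close>
definition pot_first :: "real \<Rightarrow> real \<Rightarrow> real \<Rightarrow> real \<Rightarrow> real" where
  "pot_first M k1 gam kp = min (M * (kp / k1) powr gam) M + 1"

lemma pot_first_step:
  fixes q S Fv :: real
  assumes k: "2 \<le> k" and kp: "\<delta> + 1 \<le> kp" and d: "0 < \<delta>" and M: "0 < M"
    and gam: "0 \<le> gam" "gam \<le> (\<delta> / (\<delta> + 1)) ^ (k - 1)" and k1: "0 < k1"
    and qdef: "q = succ_prob (Suc t) k (0, kp)"
    and S: "0 \<le> S" "S \<le> M" "kp \<le> k1 \<Longrightarrow> S \<le> 1"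
    and Fv: "Fv = pot_first M k1 gam (kp + (if odd (Suc t) then 1 else 0))"
  shows "q * S + (1 - q) * Fv \<le> pot_first M k1 gam kp"
proof -
  have kp1: "1 \<le> kp" using kp d by simp
  have q: "0 \<le> q" "q \<le> 1" using succ_prob_bounds[of "(0, kp)"] qdef kp1 by auto
  show ?thesis
  proof (cases "odd (Suc t)")
    case False
    have "q = 0" unfolding qdef using succ_prob_bt_blocked[of "Suc t" k kp] False k by simp
    then show ?thesis using False by (simp add: Fv)
  next
    case True
    show ?thesis
    proof (cases "kp \<le> k1")
      case False
      have "1 \<le> (kp / k1) powr gam" using False k1 gam by (intro ge_one_powr_ge_zero) auto
      then have "M \<le> M * (kp / k1) powr gam" using M by simp
      then have cur: "pot_first M k1 gam kp = M + 1" by (simp add: pot_first_def)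
      have "Fv \<le> M + 1" by (simp add: Fv pot_first_def)
      then show ?thesis using q S cur by (intro weighted_avg_le) auto
    next
      case True2: True
      have qg: "gam / kp \<le> q"
      proof -
        have "q \<ge> (1 / kp) * (\<delta> / (\<delta> + 1)) ^ (k - 1)"
          unfolding qdef using succ_prob_at_first[OF True, of k \<delta> kp 0] kp d k by auto
        moreover have "gam / kp \<le> (1 / kp) * (\<delta> / (\<delta> + 1)) ^ (k - 1)"
          using gam kp1 by (simp add: divide_right_mono)
        ultimately show ?thesis by linarith
      qed
      have cur: "pot_first M k1 gam kp = M * (kp / k1) powr gam + 1"
      proof -
        have "(kp / k1) powr gam \<le> 1" using True2 k1 kp1 gam by (intro powr_le1) auto
        then have "M * (kp / k1) powr gam \<le> M" using M by (simp add: mult_left_le)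
        then show ?thesis by (simp add: pot_first_def)
      qed
      have fv: "Fv \<le> M * ((kp + 1) / k1) powr gam + 1" using True by (simp add: Fv pot_first_def)
      have "q * S + (1 - q) * Fv \<le> q * 1 + (1 - q) * (M * ((kp + 1) / k1) powr gam + 1)"
        using S True2 fv q by (intro add_mono mult_left_mono) auto
      also have "\<dots> = 1 + M * ((1 - q) * ((kp + 1) / k1) powr gam)" by (simp add: algebra_simps)
      also have "\<dots> \<le> 1 + M * (kp / k1) powr gam"
        using powr_growth_step[OF kp1 k1 gam(1) qg q(2)] M by (intro add_left_mono mult_left_mono) auto
      also have "\<dots> = pot_first M k1 gam kp" using cur by simp
      finally show ?thesis .
    qed
  qed
qed

subsection \<open>Large k: main phase followed by the final phase\<close>

text \<open>Parameters for large k: the main phase lasts while more than m nodes are active, and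
  lam1, r0 satisfy the main-phase drift condition; qm is a lower bound on the BT success
  probability once at most m nodes are left.\<close>
locale main_phase =
  fixes \<delta> :: real and k m :: nat and M lam1 r0 qm lam2 :: real
  assumes delta: "1 \<le> \<delta>" and m: "2 * \<delta> + 2 \<le> real m" "m < k" and M: "1 \<le> M"
    and lam1: "0 < lam1"
    and r0: "0 \<le> r0" "r0 * exp (- (lam1 * (\<delta> - 1))) + (1 - r0) * exp lam1 \<le> 1"
    and rho: "r0 * exp 1 \<le> real m / (real m + ln M / lam1)"
    and qm: "0 < qm" "qm \<le> (1 / (1 + log 2 (real k))) * (1 - 1 / (1 + log 2 (real (k - m + 1)))) ^ m"
    and lam2: "0 < lam2" "lam2 \<le> qm / 4" "lam2 \<le> lam1"
begin

definition g :: real where "g = 4 / qm"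

definition Dl :: real where "Dl = (2 + g) * real m"

definition pot :: "nat \<Rightarrow> nat \<times> lstate \<Rightarrow> real" where
  "pot t x = (if fst x = 0 then 0
              else if m < fst x then pot_main lam1 M (fst x) (snd (snd x))
              else pot_final lam2 g Dl M t (fst x) (snd (snd x)))"

lemma qm_le_1: "qm \<le> 1"
proof -
  have aux: "\<And>x::real. 0 \<le> x \<Longrightarrow> 0 \<le> 1 / (1 + x) \<and> 1 / (1 + x) \<le> 1" by (simp add: divide_le_eq)
  have "0 \<le> log 2 (real (k - m + 1))" "0 \<le> log 2 (real k)" using m by simp_all
  note a = this[THEN aux]
  then have "0 \<le> (1 - 1 / (1 + log 2 (real (k - m + 1)))) ^ m"
    "(1 - 1 / (1 + log 2 (real (k - m + 1)))) ^ m \<le> 1" by (auto intro: power_le_one)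
  then have "(1 / (1 + log 2 (real k))) * (1 - 1 / (1 + log 2 (real (k - m + 1)))) ^ m \<le> 1"
    using a(2) by (intro mult_le_one) auto
  then show ?thesis using qm(2) by linarith
qed

lemma g_nonneg: "0 \<le> g" using qm by (simp add: g_def)

lemma pot_nonneg: "0 \<le> pot t x"
  using M by (auto simp: pot_def pot_main_def pot_final_def)

lemma pot_step:
  assumes r: "reach_inv \<delta> k t x"
  shows "next_exp \<delta> t pot x \<le> pot t x + exp lam1"
proof -
  obtain n sg kp where x: "x = (n, sg, kp)" by (cases x) auto
  have rn: "n \<le> k" "sg = k - n" "\<delta> + 1 \<le> kp" using r by (auto simp: reach_inv_def x)
  define q where "q = succ_prob (Suc t) n (sg, kp)"
  define kp' where "kp' = max (kp - \<delta>) (\<delta> + 1)"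
  define S where "S = pot (Suc t) (n - 1, sg + 1, kp')"
  define Fv where "Fv = pot (Suc t) (n, sg, kp + (if odd (Suc t) then 1 else 0))"
  have q01: "0 \<le> q" "q \<le> 1" using succ_prob_bounds[of "(sg, kp)"] rn delta by (auto simp: q_def)
  have next_exp: "next_exp \<delta> t pot x = q * S + (1 - q) * Fv"
    by (simp add: next_exp_def x q_def S_def Fv_def kp'_def red_succ_eq red_fail_eq)
  consider (finished) "n = 0" | (main) "m < n" | (final) "0 < n" "n \<le> m" by linarith
  then show ?thesis
  proof cases
    case finished
    then show ?thesis unfolding next_exp by (simp add: S_def Fv_def pot_def x)
  next
    case main
    have "S \<le> pot_main lam1 M (n - 1) kp'"
    proof (cases "m < n - 1")
      case False
      then have "n - 1 = m" "m \<noteq> 0" using main m delta by auto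
      then show ?thesis using lam2 M
        by (simp add: S_def pot_def Dl_def pot_final_le_main)
    qed (simp add: S_def pot_def)
    moreover have "Fv = pot_main lam1 M n (kp + (if odd (Suc t) then 1 else 0))"
      using main by (simp add: Fv_def pot_def)
    ultimately have "q * S + (1 - q) * Fv \<le> pot_main lam1 M n kp + exp lam1"
      using main m rn(3) delta M lam1 r0 rho q_def pot_nonneg
      unfolding kp'_def S_def by (intro pot_main_step) auto
    then show ?thesis unfolding next_exp using main by (simp add: pot_def x)
  next
    case final
    have "S \<le> pot_final lam2 g Dl M (Suc t) (n - 1) kp'"
      using final M by (auto simp: S_def pot_def pot_final_def)
    moreover have "Fv = pot_final lam2 g Dl M (Suc t) n (kp + (if odd (Suc t) then 1 else 0))"
      using final by (simp add: Fv_def pot_def)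
    moreover have "qm \<le> q" if "even (Suc t)"
    proof -
      have "(1 / (1 + log 2 (real k))) * (1 - 1 / (1 + log 2 (real (k - m + 1)))) ^ m \<le> q"
        unfolding q_def using succ_prob_bt[OF that _ final(2) m(2) rn(2)] final by simp
      then show ?thesis using qm(2) by linarith
    qed
    ultimately have "q * S + (1 - q) * Fv \<le> pot_final lam2 g Dl M t n kp"
      using final rn(3) delta M qm qm_le_1 lam2 q01 pot_nonneg unfolding kp'_def S_def
      by (intro pot_final_step[where qm = qm]) (auto simp: g_def)
    then have "q * S + (1 - q) * Fv \<le> pot_final lam2 g Dl M t n kp + exp lam1"
      using exp_gt_zero[of lam1] by linarith
    then show ?thesis unfolding next_exp using final by (simp add: pot_def x)
  qed
qed

text \<open>After T \<ge> 2((delta + 1)(k - 1) + Dl + 1 + ln M / lam2) steps every reachable state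
  with undelivered messages has potential at least M: kappa~ has grown too much.\<close>
lemma pot_terminal:
  assumes T: "(\<delta> + 1) * (real k - 1) + Dl + 1 + ln M / lam2 \<le> real T / 2"
    and r: "reach_inv \<delta> k T x" and n0: "fst x \<noteq> 0"
  shows "M \<le> pot T x"
proof -
  obtain n sg kp where x: "x = (n, sg, kp)" by (cases x) auto
  have kp: "kp \<ge> (\<delta> + 1) * (real n + 1 - real k) + real T / 2"
    using reach_inv_kappa_lower[OF r] by (simp add: x)
  have "(\<delta> + 1) * (real n + 1 - real k) = (\<delta> + 1) * real n - (\<delta> + 1) * (real k - 1)"
    by (simp add: algebra_simps)
  then have base: "(\<delta> + 1) * real n + Dl + 1 + ln M / lam2 \<le> kp" using kp T by linarith
  have "0 \<le> \<delta> * real n" using delta by simp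
  then have "real n \<le> (\<delta> + 1) * real n" by (simp add: algebra_simps)
  moreover have "0 \<le> Dl" "0 \<le> (1 + g) * real n" using g_nonneg by (simp_all add: Dl_def)
  moreover have "ln M / lam1 \<le> ln M / lam2" using lam2 M by (intro divide_left_mono) auto
  ultimately have far: "ln M / lam1 \<le> kp - real n" "ln M / lam2 \<le> kp + (1 + g) * real n - Dl - 1"
    using base by linarith+
  show ?thesis
  proof (cases "m < n")
    case True
    then show ?thesis using exp_ge_cap[OF lam1 _ far(1)] M n0 by (simp add: x pot_def pot_main_def)
  next
    case False
    have "M \<le> exp (lam2 * (kp + (1 + g) * real n - Dl - (if odd T then 1 else 0)))"
      using exp_ge_cap[OF lam2(1) _ far(2)] M lam2 by (auto intro: order_trans)
    then show ?thesis using False n0 by (simp add: x pot_def pot_final_def)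
  qed
qed

theorem prob_done:
  assumes T: "(\<delta> + 1) * (real k - 1) + Dl + 1 + ln M / lam2 \<le> real T / 2"
  shows "measure_pmf.prob (red_run \<delta> k T) {x. fst x = 0} \<ge> 1 - (2 + real T * exp lam1) / M"
proof -
  have "pot 0 (k, 0, \<delta> + 1) \<le> 2"
    using m lam1 M by (simp add: pot_def pot_main_def mult_nonneg_nonpos min.coboundedI1)
  moreover have "measure_pmf.prob (red_run \<delta> k T) {x. fst x = 0}
                 \<ge> 1 - (pot 0 (k, 0, \<delta> + 1) + real T * exp lam1) / M"
    using M delta by (intro prob_done_potential[OF pot_nonneg _ _ pot_step _ pot_terminal[OF T]]) auto
  ultimately show ?thesis using M by (smt (verit) divide_right_mono)
qed

end

subsection \<open>Any fixed k: first phase followed by the final phase\<close>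

text \<open>For a fixed k, a (very large) time bound suffices.  Before the first success the
  first-phase potential is used, afterwards the final phase with m = k - 1.\<close>
locale first_phase =
  fixes \<delta> :: real and k :: nat and M qm gam k1 :: real
  assumes delta: "1 \<le> \<delta>" and k: "2 \<le> k" and M: "1 \<le> M"
    and qm: "0 < qm" "qm \<le> (1 / (1 + log 2 (real k))) * (1 / 2) ^ (k - 1)"
    and gam: "0 \<le> gam" "gam \<le> (\<delta> / (\<delta> + 1)) ^ (k - 1)"
    and k1: "\<delta> + 1 \<le> k1"
begin

definition g :: real where "g = 4 / qm"

definition lam :: real where "lam = qm / 4"

definition Dl :: real where "Dl = k1 + (1 + g) * real k"

definition pot :: "nat \<Rightarrow> nat \<times> lstate \<Rightarrow> real" where
  "pot t x = (if fst x = 0 then 0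
              else if fst x = k then pot_first M k1 gam (snd (snd x))
              else pot_final lam g Dl M t (fst x) (snd (snd x)))"

lemma qm_le_1: "qm \<le> 1"
proof -
  have "0 \<le> log 2 (real k)" using k by simp
  then have "1 / (1 + log 2 (real k)) \<le> 1" by (simp add: divide_le_eq)
  moreover have "(1 / 2 :: real) ^ (k - 1) \<le> 1" by (simp add: power_le_one)
  ultimately have "(1 / (1 + log 2 (real k))) * (1 / 2) ^ (k - 1) \<le> 1" by (intro mult_le_one) auto
  then show ?thesis using qm(2) by linarith
qed

lemma g_nonneg: "0 \<le> g" using qm by (simp add: g_def)

lemma pot_nonneg: "0 \<le> pot t x"
  using M by (auto simp: pot_def pot_first_def pot_final_def)

lemma succ_prob_bt_after_first:
  assumes "even s" "1 \<le> n" "n < k" "sg = k - n"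
  shows "qm \<le> succ_prob s n (sg, kp)"
proof -
  have "real (k - (k - 1) + 1) = 2" using k by simp
  then have "(1 / (1 + log 2 (real k))) * (1 / 2) ^ (k - 1) \<le> succ_prob s n (sg, kp)"
    using succ_prob_bt[OF assms(1,2) _ _ assms(4), of "k - 1"] assms(3) k by simp
  then show ?thesis using qm(2) by linarith
qed

lemma pot_step:
  assumes r: "reach_inv \<delta> k t x"
  shows "next_exp \<delta> t pot x \<le> pot t x + 0"
proof -
  obtain n sg kp where x: "x = (n, sg, kp)" by (cases x) auto
  have rn: "n \<le> k" "sg = k - n" "\<delta> + 1 \<le> kp" using r by (auto simp: reach_inv_def x)
  define q where "q = succ_prob (Suc t) n (sg, kp)"
  define kp' where "kp' = max (kp - \<delta>) (\<delta> + 1)"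
  define S where "S = pot (Suc t) (n - 1, sg + 1, kp')"
  define Fv where "Fv = pot (Suc t) (n, sg, kp + (if odd (Suc t) then 1 else 0))"
  have q01: "0 \<le> q" "q \<le> 1" using succ_prob_bounds[of "(sg, kp)"] rn delta by (auto simp: q_def)
  have next_exp: "next_exp \<delta> t pot x = q * S + (1 - q) * Fv"
    by (simp add: next_exp_def x q_def S_def Fv_def kp'_def red_succ_eq red_fail_eq)
  consider (finished) "n = 0" | (first) "n = k" | (final) "0 < n" "n < k" using rn by linarith
  then show ?thesis
  proof cases
    case finished
    then show ?thesis unfolding next_exp by (simp add: S_def Fv_def pot_def x)
  next
    case first
    have "k - 1 \<noteq> k" "k - 1 \<noteq> 0" using k by auto
    then have S: "S = pot_final lam g Dl M (Suc t) (k - 1) kp'"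
      using first by (simp add: S_def pot_def)
    have "S \<le> 1" if "kp \<le> k1"
    proof -
      have "kp' \<le> k1" using that rn(3) delta by (simp add: kp'_def)
      moreover have "(1 + g) * real (k - 1) \<le> (1 + g) * real k" using g_nonneg by (intro mult_left_mono) auto
      moreover have "0 \<le> (if odd (Suc t) then 1 else 0 :: real)" by simp
      ultimately have "kp' + (1 + g) * real (k - 1) - Dl - (if odd (Suc t) then 1 else 0) \<le> 0"
        unfolding Dl_def by linarith
      then have "exp (lam * (kp' + (1 + g) * real (k - 1) - Dl - (if odd (Suc t) then 1 else 0))) \<le> 1"
        using qm by (simp add: lam_def mult_nonneg_nonpos)
      then show ?thesis unfolding S pot_final_def by (rule min.coboundedI1)
    qed
    moreover have "S \<le> M" unfolding S pot_final_def by simp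
    moreover have "Fv = pot_first M k1 gam (kp + (if odd (Suc t) then 1 else 0))"
      using first k by (simp add: Fv_def pot_def)
    moreover have "q = succ_prob (Suc t) k (0, kp)" using first rn by (simp add: q_def)
    ultimately have "q * S + (1 - q) * Fv \<le> pot_first M k1 gam kp"
      using pot_nonneg k rn(3) delta M gam k1 unfolding S_def
      by (intro pot_first_step[where \<delta> = \<delta> and k = k and t = t]) auto
    then show ?thesis unfolding next_exp using first k by (simp add: pot_def x)
  next
    case final
    have "S \<le> pot_final lam g Dl M (Suc t) (n - 1) kp'"
      using final M by (auto simp: S_def pot_def pot_final_def)
    moreover have "Fv = pot_final lam g Dl M (Suc t) n (kp + (if odd (Suc t) then 1 else 0))"
      using final by (simp add: Fv_def pot_def)
    moreover have "qm \<le> q" if "even (Suc t)"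
      using succ_prob_bt_after_first[OF that] final rn unfolding q_def by simp
    ultimately have "q * S + (1 - q) * Fv \<le> pot_final lam g Dl M t n kp"
      using final rn(3) delta M qm qm_le_1 q01 pot_nonneg unfolding kp'_def S_def
      by (intro pot_final_step[where qm = qm]) (auto simp: g_def lam_def)
    then show ?thesis unfolding next_exp using final by (simp add: pot_def x)
  qed
qed

lemma pot_terminal:
  assumes T1: "k1 \<le> real T / 2"
    and T2: "(\<delta> + 1) * (real k - 1) + Dl + 1 + ln M / lam \<le> real T / 2"
    and r: "reach_inv \<delta> k T x" and n0: "fst x \<noteq> 0"
  shows "M \<le> pot T x"
proof -
  obtain n sg kp where x: "x = (n, sg, kp)" by (cases x) auto
  have n: "1 \<le> n" "n \<le> k" using n0 r by (auto simp: x reach_inv_def)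
  have kp: "kp \<ge> (\<delta> + 1) * (real n + 1 - real k) + real T / 2"
    using reach_inv_kappa_lower[OF r] by (simp add: x)
  show ?thesis
  proof (cases "n = k")
    case True
    then have "k1 \<le> kp" using kp T1 delta by simp
    then have "1 \<le> (kp / k1) powr gam" using k1 delta gam by (intro ge_one_powr_ge_zero) auto
    then show ?thesis using True n0 M by (simp add: x pot_def pot_first_def)
  next
    case False
    have "(\<delta> + 1) * (real n + 1 - real k) \<ge> - ((\<delta> + 1) * (real k - 1))"
      using n delta by (simp add: algebra_simps)
    moreover have "0 \<le> (1 + g) * real n" using g_nonneg by simp
    ultimately have "ln M / lam \<le> kp + (1 + g) * real n - Dl - 1"
      using kp T2 by linarith
    then have "ln M / lam \<le> kp + (1 + g) * real n - Dl - (if odd T then 1 else 0)" by auto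
    then have "M \<le> exp (lam * (kp + (1 + g) * real n - Dl - (if odd T then 1 else 0)))"
      using qm M by (intro exp_ge_cap) (auto simp: lam_def)
    then show ?thesis using False n0 by (simp add: x pot_def pot_final_def)
  qed
qed

theorem prob_done:
  assumes "k1 \<le> real T / 2" "(\<delta> + 1) * (real k - 1) + Dl + 1 + ln M / lam \<le> real T / 2"
  shows "measure_pmf.prob (red_run \<delta> k T) {x. fst x = 0} \<ge> 1 - (M * ((\<delta> + 1) / k1) powr gam + 1) / M"
proof -
  have "pot 0 (k, 0, \<delta> + 1) \<le> M * ((\<delta> + 1) / k1) powr gam + 1"
    using k by (simp add: pot_def pot_first_def)
  moreover have "measure_pmf.prob (red_run \<delta> k T) {x. fst x = 0}
                 \<ge> 1 - (pot 0 (k, 0, \<delta> + 1) + real T * 0) / M"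
    using M delta by (intro prob_done_potential[OF pot_nonneg _ _ pot_step _ pot_terminal[OF assms]]) auto
  ultimately show ?thesis using M by (smt (verit) divide_right_mono)
qed

end

section \<open>Choice of the constants\<close>

lemma ln_le_2sqrt: "0 < x \<Longrightarrow> ln x \<le> 2 * sqrt x"
proof -
  assume x: "0 < x"
  have "ln x = 2 * ln (sqrt x)" using x by (simp add: ln_sqrt)
  also have "ln (sqrt x) \<le> sqrt x - 1" using x by (intro ln_le_minus_one) auto
  then have "2 * ln (sqrt x) \<le> 2 * sqrt x" by simp
  finally show ?thesis .
qed

lemma ln_Suc_le: "2 \<le> k \<Longrightarrow> ln (real k + 1) \<le> 2 * ln 2 * log 2 (real k)"
proof -
  assume k: "2 \<le> k"
  have "ln (real k + 1) \<le> ln (2 * real k)" using k by (subst ln_le_cancel_iff) auto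
  also have "\<dots> = ln 2 + ln (real k)" using k by (simp add: ln_mult)
  also have "ln 2 \<le> ln (real k)" using k by (subst ln_le_cancel_iff) auto
  then have "ln 2 + ln (real k) \<le> 2 * ln (real k)" by simp
  also have "ln (real k) = ln 2 * log 2 (real k)" by (simp add: log_def)
  finally show ?thesis by simp
qed

lemma pow_lower_exp: fixes x :: real shows "0 \<le> x \<Longrightarrow> x \<le> 1/2 \<Longrightarrow> (1 - x) ^ m \<ge> exp (- 2 * x * real m)"
proof -
  assume x: "0 \<le> x" "x \<le> 1/2"
  have "- x - 2 * x\<^sup>2 \<le> ln (1 - x)" by (rule ln_one_minus_pos_lower_bound[OF x])
  moreover have "- 2 * x \<le> - x - 2 * x\<^sup>2"
  proof -
    have "x * (2 * x) \<le> x * 1" using x by (intro mult_left_mono) auto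
    then show ?thesis by (simp add: power2_eq_square algebra_simps)
  qed
  ultimately have l: "- 2 * x \<le> ln (1 - x)" by linarith
  have ee: "exp (ln (1 - x)) = 1 - x" using x by simp
  have "(1 - x) ^ m = exp (ln (1 - x)) ^ m" by (simp only: ee)
  also have "\<dots> = exp (real m * ln (1 - x))" by (rule exp_of_nat_mult[symmetric])
  finally have "(1 - x) ^ m = exp (real m * ln (1 - x))" .
  also have "real m * ln (1 - x) \<ge> real m * (- 2 * x)" using l by (intro mult_left_mono) auto
  then have "exp (real m * ln (1 - x)) \<ge> exp (- 2 * x * real m)" by (simp add: algebra_simps)
  ultimately show ?thesis by simp
qed

lemma log2_le_self: "1 \<le> k \<Longrightarrow> log 2 (real k) \<le> real k"
proof -
  assume k: "1 \<le> k"
  have "real k < 2 ^ k" by (metis of_nat_less_iff of_nat_numeral of_nat_power less_exp)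
  then have "log 2 (real k) < log 2 (2 ^ k)" using k by (subst log_less_cancel_iff) auto
  then show ?thesis by simp
qed

text \<open>The main phase ends at m = \<lceil>A ln(k+1) + 2 delta + 2\<rceil> nodes, which is at most k/2
  when k is large compared with A^2 and delta.\<close>
lemma main_phase_size:
  fixes A \<delta> :: real and k :: nat
  assumes A: "0 < A" and d: "1 \<le> \<delta>" and k1: "128 * A\<^sup>2 + 2 \<le> real k" and k2: "4 * (2 * \<delta> + 3) \<le> real k"
  defines "m \<equiv> nat \<lceil>A * ln (real k + 1) + 2 * \<delta> + 2\<rceil>"
  shows "A * ln (real k + 1) + 2 * \<delta> + 2 \<le> real m" "real m \<le> A * ln (real k + 1) + (2 * \<delta> + 3)"
    "2 * real m \<le> real k"
proof -
  have lnpos: "0 \<le> ln (real k + 1)" by simp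
  have pos: "0 \<le> A * ln (real k + 1) + 2 * \<delta> + 2" using A d lnpos by simp
  show m1: "A * ln (real k + 1) + 2 * \<delta> + 2 \<le> real m"
    unfolding m_def using pos by linarith
  show m2: "real m \<le> A * ln (real k + 1) + (2 * \<delta> + 3)"
    unfolding m_def using pos by linarith
  have kpos: "0 < real k" using k2 d by simp
  have sq: "sqrt (real k + 1) \<le> real k / (8 * A)"
  proof -
    have "real k * (128 * A\<^sup>2 + 2) \<le> real k * real k" using k1 kpos by (intro mult_left_mono) auto
    moreover have "64 * A\<^sup>2 * (real k + 1) \<le> real k * (128 * A\<^sup>2 + 2)"
    proof -
      have "1 \<le> real k" using k1 by (smt (verit) zero_le_power2)
      then have "64 * A\<^sup>2 * 1 \<le> 64 * A\<^sup>2 * real k" by (intro mult_left_mono) auto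
      then show ?thesis using kpos by (simp add: algebra_simps)
    qed
    ultimately have "64 * A\<^sup>2 * (real k + 1) \<le> real k * real k" by linarith
    then have "real k + 1 \<le> (real k / (8 * A))\<^sup>2"
      using A by (simp add: power2_eq_square field_simps)
    then have "sqrt (real k + 1) \<le> sqrt ((real k / (8 * A))\<^sup>2)" by (subst real_sqrt_le_iff) auto
    also have "\<dots> = real k / (8 * A)" using A kpos by simp
    finally show ?thesis .
  qed
  have "A * ln (real k + 1) \<le> A * (2 * sqrt (real k + 1))"
    using A ln_le_2sqrt[of "real k + 1"] by (intro mult_left_mono) auto
  also have "\<dots> \<le> A * (2 * (real k / (8 * A)))" using A sq by (intro mult_left_mono) auto
  also have "\<dots> = real k / 4" using A by simp
  finally have "A * ln (real k + 1) \<le> real k / 4" .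
  then have h: "4 * (A * ln (real k + 1)) \<le> real k" by simp
  show "2 * real m \<le> real k" using m2 k2 h by (smt (verit))
qed

lemma bt_factor_lower:
  fixes A c0 :: real and k m :: nat
  assumes A: "0 \<le> A" and c0: "0 \<le> c0" and k: "2 \<le> k" and km: "2 * real m \<le> real k"
    and mA: "real m \<le> A * ln (real k + 1) + c0"
  shows "(1 - 1 / (1 + log 2 (real (k - m + 1)))) ^ m \<ge> exp (- 2 * (2 * A * ln 2 + c0))"
proof -
  define L where "L = log 2 (real k)"
  have L1: "1 \<le> L" using k by (simp add: L_def le_log_iff)
  have mk: "m \<le> k" using km by linarith
  have r: "real (k - m + 1) = real k - real m + 1" using mk by simp
  have kk: "real k / 2 \<le> real (k - m + 1)" using km r by simp
  have kk2: "2 \<le> real (k - m + 1)" using km r k by simp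
  have lg: "L - 1 \<le> log 2 (real (k - m + 1))"
  proof -
    have "L - 1 = log 2 (real k / 2)" using k by (simp add: L_def log_divide)
    also have "\<dots> \<le> log 2 (real (k - m + 1))" using kk k by (subst log_le_cancel_iff) auto
    finally show ?thesis .
  qed
  have lg1: "1 \<le> log 2 (real (k - m + 1))" using kk2 by (simp add: le_log_iff)
  define ph where "ph = 1 / (1 + log 2 (real (k - m + 1)))"
  have ph0: "0 \<le> ph" using lg1 by (simp add: ph_def)
  have aux: "\<And>x::real. 1 \<le> x \<Longrightarrow> 1 / (1 + x) \<le> 1 / 2" by (simp add: divide_le_eq)
  have ph2: "ph \<le> 1 / 2" unfolding ph_def using aux[OF lg1] .
  have phL: "ph \<le> 1 / L" unfolding ph_def using lg L1 by (intro divide_left_mono) auto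
  have "ph * real m \<le> (1 / L) * (A * ln (real k + 1) + c0)"
    using phL mA ph0 L1 by (intro mult_mono) auto
  also have "\<dots> \<le> (1 / L) * (A * (2 * ln 2 * L) + c0 * L)"
  proof -
    have "A * ln (real k + 1) \<le> A * (2 * ln 2 * L)" using A ln_Suc_le[OF k] by (intro mult_left_mono) (auto simp: L_def)
    moreover have "c0 \<le> c0 * L" using c0 L1 by (simp add: mult_le_cancel_left1)
    ultimately show ?thesis using L1 by (intro mult_left_mono) auto
  qed
  also have "\<dots> = 2 * A * ln 2 + c0" using L1 by (simp add: field_simps)
  finally have pm: "ph * real m \<le> 2 * A * ln 2 + c0" .
  have "(1 - ph) ^ m \<ge> exp (- 2 * ph * real m)" by (rule pow_lower_exp[OF ph0 ph2])
  moreover have "exp (- 2 * (2 * A * ln 2 + c0)) \<le> exp (- 2 * ph * real m)" using pm by simp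
  ultimately show ?thesis unfolding ph_def by linarith
qed

text \<open>All constants depend on delta only.  r0 e = rho lies strictly between 1/2 and 1 and
  r0 delta > 1; the main phase runs down to m(k) = A ln(k+1) + O(1) active nodes, where
  A is chosen so that kappa~ \<le> n + W, W = ln M / lam1, forces r0 \<le> n/(e kappa~).
  With the cap M(k) = (k+1)^4, the Markov bound (2 + 3T)/M is at most 2/(k+1) for
  T = O(k^2), and the phases take  2(delta + 1)k + O(log^2 k)  steps.\<close>
locale large_k =
  fixes \<delta> :: real
  assumes delta_gt_e: "exp 1 < \<delta>"
begin

definition rho :: real where "rho = (1 + exp 1 / \<delta>) / 2"
definition r0 :: real where "r0 = rho / exp 1"
definition lam1 :: real where "lam1 = min 1 ((r0 * \<delta> - 1) / \<delta>\<^sup>2)"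
definition A :: real where "A = 4 * rho / ((1 - rho) * lam1)"
definition c0 :: real where "c0 = 2 * \<delta> + 3"
definition th :: real where "th = exp (- 2 * (2 * A * ln 2 + c0))"
definition C2 :: real where "C2 = 2 * (2 + 8 / th) * (2 * A + c0) + 16 * (1 / lam1 + 8 / th)"
definition K0 :: nat where "K0 = nat \<lceil>max (max (128 * A\<^sup>2 + 2) (4 * c0)) (2 * (c0 + C2) + 4)\<rceil>"

definition m :: "nat \<Rightarrow> nat" where "m k = nat \<lceil>A * ln (real k + 1) + 2 * \<delta> + 2\<rceil>"
definition M :: "nat \<Rightarrow> real" where "M k = (real k + 1) ^ 4"
definition qm :: "nat \<Rightarrow> real" where
  "qm k = (1 / (1 + log 2 (real k))) * (1 - 1 / (1 + log 2 (real (k - m k + 1)))) ^ m k"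
definition lam2 :: "nat \<Rightarrow> real" where "lam2 k = min lam1 (qm k / 4)"
definition R :: "nat \<Rightarrow> real" where
  "R k = (\<delta> + 1) * (real k - 1) + (2 + 4 / qm k) * real (m k) + 1 + ln (M k) / lam2 k"

lemma delta: "2 < \<delta>"
  using delta_gt_e exp_ge_add_one_self[of 1] by linarith

lemma rho: "1 / 2 < rho" "rho < 1"
proof -
  have "exp 1 / \<delta> < 1" "0 < exp 1 / \<delta>" using delta_gt_e delta by (simp_all add: divide_less_eq)
  then show "1 / 2 < rho" "rho < 1" by (auto simp: rho_def)
qed

lemma r0: "0 \<le> r0" "r0 \<le> 1" "1 < r0 * \<delta>"
proof -
  have "2 * (r0 * \<delta>) = \<delta> / exp 1 + 1" using delta by (simp add: r0_def rho_def field_simps)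
  moreover have "1 < \<delta> / exp 1" using delta_gt_e by (simp add: less_divide_eq)
  ultimately show "1 < r0 * \<delta>" by linarith
  show "0 \<le> r0" "r0 \<le> 1" using rho exp_ge_add_one_self[of 1] by (auto simp: r0_def divide_le_eq)
qed

lemma lam1: "0 < lam1" "lam1 \<le> 1" "lam1 \<le> (r0 * \<delta> - 1) / \<delta>\<^sup>2"
  using r0 delta by (auto simp: lam1_def)

lemma drift: "r0 * exp (- (lam1 * (\<delta> - 1))) + (1 - r0) * exp lam1 \<le> 1"
  using r0 delta lam1 by (intro exp_drift_at) auto

lemma A_pos: "0 < A" using rho lam1 by (simp add: A_def)

lemma c0_nonneg: "0 \<le> c0" using delta by (simp add: c0_def)

lemma th: "0 < th" "th \<le> 1"
proof -
  have "0 \<le> 2 * A * ln 2 + c0" using A_pos c0_nonneg by simp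
  then show "0 < th" "th \<le> 1" by (auto simp: th_def)
qed

lemma C2_nonneg: "0 \<le> C2" using th lam1 A_pos c0_nonneg by (simp add: C2_def)

context
  fixes k :: nat
  assumes kK: "K0 \<le> k"
begin

lemma k_large: "128 * A\<^sup>2 + 2 \<le> real k" "4 * c0 \<le> real k" "2 * (c0 + C2) + 4 \<le> real k" "2 \<le> k"
proof -
  show k1: "128 * A\<^sup>2 + 2 \<le> real k" "4 * c0 \<le> real k" "2 * (c0 + C2) + 4 \<le> real k"
    using kK unfolding K0_def by linarith+
  have "0 \<le> 128 * A\<^sup>2" by simp
  then have "2 \<le> real k" using k1(1) by linarith
  then show "2 \<le> k" by simp
qed

lemma log_k: "1 \<le> log 2 (real k)" "log 2 (real k) \<le> real k"
proof -
  have "2 \<le> real k" using k_large(4) by simp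
  then show "1 \<le> log 2 (real k)" by (simp add: le_log_iff)
  show "log 2 (real k) \<le> real k" using k_large(4) by (intro log2_le_self) simp
qed

lemma m_bounds: "A * ln (real k + 1) + 2 * \<delta> + 2 \<le> real (m k)"
  "real (m k) \<le> A * ln (real k + 1) + c0" "2 * real (m k) \<le> real k" "m k < k"
proof -
  note mf = main_phase_size[OF A_pos _ k_large(1), of \<delta>, folded m_def]
  show m1: "A * ln (real k + 1) + 2 * \<delta> + 2 \<le> real (m k)"
    and "real (m k) \<le> A * ln (real k + 1) + c0" and m3: "2 * real (m k) \<le> real k"
    using mf delta k_large(2) by (auto simp: c0_def)
  have "0 \<le> A * ln (real k + 1)" using A_pos by simp
  then show "m k < k" using m1 m3 delta by linarith
qed

lemma qm_lower: "0 < th / (2 * log 2 (real k))" "th / (2 * log 2 (real k)) \<le> qm k" "0 < qm k"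
proof -
  have L: "0 < log 2 (real k)" "0 < 1 + log 2 (real k)" "1 + log 2 (real k) \<le> 2 * log 2 (real k)"
    using log_k(1) by linarith+
  then show pos: "0 < th / (2 * log 2 (real k))" using th by simp
  have pw: "th \<le> (1 - 1 / (1 + log 2 (real (k - m k + 1)))) ^ m k"
    using bt_factor_lower[OF less_imp_le[OF A_pos] c0_nonneg k_large(4) m_bounds(3,2)]
    by (simp add: th_def)
  have "1 / (2 * log 2 (real k)) \<le> 1 / (1 + log 2 (real k))"
    by (rule frac_le) (use L in linarith)+
  then have "(1 / (2 * log 2 (real k))) * th \<le> qm k"
    unfolding qm_def using pw th L by (intro mult_mono) auto
  then show lower: "th / (2 * log 2 (real k)) \<le> qm k" by simp
  then show "0 < qm k" using pos by linarith
qed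

lemma four_div_qm: "4 / qm k \<le> 8 / th * log 2 (real k)"
proof -
  have "4 / qm k \<le> 4 / (th / (2 * log 2 (real k)))"
    by (rule frac_le) (use qm_lower in auto)
  also have "\<dots> = 8 / th * log 2 (real k)" using th log_k by (simp add: field_simps)
  finally show ?thesis .
qed

lemma ln_k: "ln (real k + 1) \<le> 2 * log 2 (real k)"
proof -
  have "ln (2::real) \<le> 1" using ln_le_minus_one[of 2] by simp
  then have "2 * ln 2 * log 2 (real k) \<le> 2 * 1 * log 2 (real k)"
    using log_k by (intro mult_right_mono mult_left_mono) auto
  then show ?thesis using ln_Suc_le[OF k_large(4)] by linarith
qed

text \<open>Length of the final phase: (2 + g) m = O(log^2 k).\<close>
lemma final_phase_length: "(2 + 4 / qm k) * real (m k) \<le> (2 + 8 / th) * (2 * A + c0) * (log 2 (real k))\<^sup>2"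
proof -
  have "real (m k) \<le> A * (2 * log 2 (real k)) + c0"
    using m_bounds(2) ln_k A_pos by (smt (verit) mult_left_mono)
  also have "\<dots> \<le> (2 * A + c0) * log 2 (real k)"
    using c0_nonneg log_k by (simp add: algebra_simps mult_le_cancel_left1)
  finally have "real (m k) \<le> (2 * A + c0) * log 2 (real k)" .
  moreover have "2 + 4 / qm k \<le> (2 + 8 / th) * log 2 (real k)"
    using four_div_qm log_k by (simp add: algebra_simps)
  ultimately have "(2 + 4 / qm k) * real (m k) \<le> ((2 + 8 / th) * log 2 (real k)) * ((2 * A + c0) * log 2 (real k))"
    using qm_lower th log_k by (intro mult_mono) auto
  then show ?thesis by (simp add: power2_eq_square algebra_simps)
qed

text \<open>Time for kappa~ to climb above the cap: ln M / lam2 = O(log^2 k).\<close>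
lemma cap_time: "ln (M k) / lam2 k \<le> 8 * (1 / lam1 + 8 / th) * (log 2 (real k))\<^sup>2"
proof -
  have "1 / lam2 k \<le> 1 / lam1 + 4 / qm k"
    using lam1 qm_lower by (cases "lam1 \<le> qm k / 4") (auto simp: lam2_def)
  also have "\<dots> \<le> (1 / lam1 + 8 / th) * log 2 (real k)"
  proof -
    have "1 / lam1 \<le> log 2 (real k) / lam1" using lam1 log_k by (simp add: divide_right_mono)
    then show ?thesis using four_div_qm by (simp add: algebra_simps)
  qed
  finally have inv: "1 / lam2 k \<le> (1 / lam1 + 8 / th) * log 2 (real k)" .
  have lnM: "ln (M k) \<le> 8 * log 2 (real k)" "0 \<le> ln (M k)"
    using ln_k by (simp_all add: M_def ln_realpow)
  have "ln (M k) / lam2 k = ln (M k) * (1 / lam2 k)" by simp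
  also have "\<dots> \<le> (8 * log 2 (real k)) * ((1 / lam1 + 8 / th) * log 2 (real k))"
    using inv lnM lam1 qm_lower by (intro mult_mono) (auto simp: lam2_def)
  finally show ?thesis by (simp add: power2_eq_square algebra_simps)
qed

lemma lam2: "0 < lam2 k" "lam2 k \<le> qm k / 4" "lam2 k \<le> lam1"
  using lam1 qm_lower by (auto simp: lam2_def)

lemma R_bound: "2 * R k \<le> 2 * (\<delta> + 1) * real k + C2 * (log 2 (real k))\<^sup>2"
proof -
  define X where "X = (\<delta> + 1) * real k"
  define P where "P = (2 + 8 / th) * (2 * A + c0) * (log 2 (real k))\<^sup>2"
  define Q where "Q = 8 * (1 / lam1 + 8 / th) * (log 2 (real k))\<^sup>2"
  have "R k = X - (\<delta> + 1) + (2 + 4 / qm k) * real (m k) + 1 + ln (M k) / lam2 k"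
    by (simp add: R_def X_def algebra_simps)
  moreover have "C2 * (log 2 (real k))\<^sup>2 = 2 * P + 2 * Q"
    by (simp add: C2_def P_def Q_def algebra_simps add_divide_distrib)
  moreover have "2 * (\<delta> + 1) * real k = 2 * X" by (simp add: X_def)
  ultimately show ?thesis using final_phase_length cap_time delta
    unfolding P_def[symmetric] Q_def[symmetric] by linarith
qed

lemma main_phase_instance: "main_phase \<delta> k (m k) (M k) lam1 r0 (qm k) (lam2 k)"
proof
  have "0 \<le> A * ln (real k + 1)" using A_pos by simp
  then show m: "2 * \<delta> + 2 \<le> real (m k)" using m_bounds(1) by linarith
  have W: "ln (M k) / lam1 = 4 * ln (real k + 1) / lam1" by (simp add: M_def ln_realpow)
  then have W0: "0 \<le> ln (M k) / lam1" using lam1 by simp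
  have "rho * (ln (M k) / lam1) = (1 - rho) * (A * ln (real k + 1))"
    using rho lam1 by (simp add: W A_def field_simps)
  also have "\<dots> \<le> (1 - rho) * real (m k)" using m_bounds(1) rho delta by (intro mult_left_mono) auto
  finally have "rho * (real (m k) + ln (M k) / lam1) \<le> real (m k)" by (simp add: algebra_simps)
  moreover have "0 < real (m k) + ln (M k) / lam1" using m W0 delta by linarith
  ultimately show "r0 * exp 1 \<le> real (m k) / (real (m k) + ln (M k) / lam1)"
    by (simp add: r0_def le_divide_eq)
qed (use delta m_bounds(4) lam1 r0 drift qm_lower lam2 in \<open>auto simp: M_def qm_def\<close>)

lemma markov_bound_small:
  assumes T: "real T \<le> 2 * R k + 1"
  shows "(2 + real T * exp lam1) / M k \<le> 2 / (1 + real k)"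
proof -
  have kk: "1 \<le> real k" using k_large(4) by simp
  have "real T \<le> 2 * (\<delta> + 1) * real k + C2 * (log 2 (real k))\<^sup>2 + 1" using T R_bound by simp
  also have "\<dots> \<le> (c0 + C2) * (real k)\<^sup>2"
  proof -
    have "real k \<le> (real k)\<^sup>2" using kk by (simp add: power2_eq_square)
    then have "2 * (\<delta> + 1) * real k \<le> 2 * (\<delta> + 1) * (real k)\<^sup>2" using delta by (intro mult_left_mono) auto
    moreover have "C2 * (log 2 (real k))\<^sup>2 \<le> C2 * (real k)\<^sup>2"
      using log_k C2_nonneg by (intro mult_left_mono power_mono) auto
    moreover have "1 \<le> (real k)\<^sup>2" using kk by (simp add: one_le_power)
    moreover have "(c0 + C2) * (real k)\<^sup>2 = 2 * (\<delta> + 1) * (real k)\<^sup>2 + C2 * (real k)\<^sup>2 + (real k)\<^sup>2"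
      by (simp add: c0_def algebra_simps)
    ultimately show ?thesis by linarith
  qed
  finally have "real T \<le> (c0 + C2) * (real k)\<^sup>2" .
  then have T': "3 * real T \<le> 3 * (c0 + C2) * (real k)\<^sup>2" by (simp only: mult.assoc)
  have "3 * (c0 + C2) \<le> 2 * real k" using k_large(3) c0_nonneg C2_nonneg by linarith
  then have "3 * (c0 + C2) * (real k)\<^sup>2 \<le> 2 * real k * (real k)\<^sup>2" by (intro mult_right_mono) auto
  with T' have "3 * real T \<le> 2 * real k * (real k)\<^sup>2" by linarith
  moreover have "2 * real k * (real k)\<^sup>2 + 2 \<le> 2 * (real k + 1) ^ 3"
    by (simp add: power2_eq_square power3_eq_cube algebra_simps)
  ultimately have "2 + 3 * real T \<le> 2 * (real k + 1) ^ 3" by linarith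
  moreover have "exp lam1 \<le> 3" using lam1 exp_le by (smt (verit) exp_le_cancel_iff)
  then have "real T * exp lam1 \<le> real T * 3" by (intro mult_left_mono) auto
  ultimately have "2 + real T * exp lam1 \<le> 2 * (real k + 1) ^ 3" by linarith
  then have "(2 + real T * exp lam1) / M k \<le> 2 * (real k + 1) ^ 3 / (real k + 1) ^ 4"
    by (simp add: M_def divide_right_mono)
  also have "\<dots> = 2 / (1 + real k)"
  proof -
    have "(real k + 1) ^ 4 = (real k + 1) ^ 3 * (real k + 1)" by (rule power_Suc2[of _ 3, simplified])
    moreover have "(real k + 1) ^ 3 \<noteq> 0" by simp
    ultimately show ?thesis by (simp add: add.commute)
  qed
  finally show ?thesis .
qed

theorem prob_done:
  assumes T: "2 * R k + 1 \<le> real T"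
  shows "measure_pmf.prob (red_run \<delta> k T) {x. fst x = 0} \<ge> 1 - 2 / (1 + real k)"
proof -
  interpret mp: main_phase \<delta> k "m k" "M k" lam1 r0 "qm k" "lam2 k" by (rule main_phase_instance)
  define T0 where "T0 = nat \<lceil>2 * R k\<rceil>"
  have R0: "0 \<le> R k"
    using k_large(4) m_bounds(1) delta A_pos lam1 qm_lower
    by (auto simp: R_def M_def lam2_def intro!: add_nonneg_nonneg divide_nonneg_pos)
  have T0: "2 * R k \<le> real T0" "real T0 \<le> 2 * R k + 1" using R0 by (simp_all add: T0_def)
  have "R k = (\<delta> + 1) * (real k - 1) + mp.Dl + 1 + ln (M k) / lam2 k"
    by (simp add: R_def mp.Dl_def mp.g_def)
  then have "(\<delta> + 1) * (real k - 1) + mp.Dl + 1 + ln (M k) / lam2 k \<le> real T0 / 2"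
    using T0(1) by linarith
  then have "1 - (2 + real T0 * exp lam1) / M k \<le> measure_pmf.prob (red_run \<delta> k T0) {x. fst x = 0}"
    by (rule mp.prob_done)
  then have "1 - 2 / (1 + real k) \<le> measure_pmf.prob (red_run \<delta> k T0) {x. fst x = 0}"
    using markov_bound_small[OF T0(2)] by linarith
  also have "\<dots> \<le> measure_pmf.prob (red_run \<delta> k T) {x. fst x = 0}"
    using T T0 by (intro prob_done_mono) linarith
  finally show ?thesis .
qed

end

end

theorem (in large_k) prob_done_large:
  assumes k: "K0 \<le> k" and T: "2 * (\<delta> + 1) * real k + (C2 + 2) * (log 2 (real k))\<^sup>2 - 1 \<le> real T"
  shows "measure_pmf.prob (red_run \<delta> k T) {x. fst x = 0} \<ge> 1 - 2 / (1 + real k)"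
proof (rule prob_done[OF k])
  have "1 \<le> (log 2 (real k))\<^sup>2" using log_k[OF k] by (simp add: one_le_power)
  then show "2 * R k + 1 \<le> real T" using R_bound[OF k] T by (simp add: algebra_simps)
qed

text \<open>For every fixed k some finite time suffices; only finitely many k are below the
  threshold K0 of the large-k analysis, so these times are absorbed into the constant.\<close>
lemma prob_done_eventually:
  assumes delta: "1 \<le> \<delta>" and k: "2 \<le> k"
  shows "\<exists>Tk. \<forall>T. Tk \<le> T \<longrightarrow> measure_pmf.prob (red_run \<delta> k T) {x. fst x = 0} \<ge> 1 - 2 / (1 + real k)"
proof -
  define qm :: real where "qm = (1 / (1 + log 2 (real k))) * (1 / 2) ^ (k - 1)"
  define gam where "gam = (\<delta> / (\<delta> + 1)) ^ (k - 1)"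
  define k1 where "k1 = (\<delta> + 1) * (real k + 1) powr (1 / gam)"
  have qm: "0 < qm" using k by (simp add: qm_def add_pos_nonneg)
  have gam: "0 < gam" using delta by (simp add: gam_def)
  have "1 \<le> (real k + 1) powr (1 / gam)" using gam by (intro ge_one_powr_ge_zero) auto
  then have k1: "\<delta> + 1 \<le> k1" using delta by (simp add: k1_def)
  interpret fp: first_phase \<delta> k "real k + 1" qm gam k1
    using delta k qm gam k1 by unfold_locales (auto simp: qm_def gam_def)
  define R where "R = max k1 ((\<delta> + 1) * (real k - 1) + fp.Dl + 1 + ln (real k + 1) / fp.lam)"
  have "((\<delta> + 1) / k1) powr gam = 1 / (real k + 1)"
  proof -
    have "((\<delta> + 1) / k1) powr gam = 1 / ((real k + 1) powr (1 / gam)) powr gam"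
      using delta by (simp add: k1_def powr_divide)
    also have "\<dots> = 1 / (real k + 1)" using gam by (simp add: powr_powr)
    finally show ?thesis .
  qed
  then have bound: "((real k + 1) * ((\<delta> + 1) / k1) powr gam + 1) / (real k + 1) = 2 / (1 + real k)"
    by (simp add: field_simps)
  show ?thesis
  proof (intro exI allI impI)
    fix T assume "nat \<lceil>2 * R\<rceil> \<le> T"
    then have "R \<le> real T / 2" by linarith
    moreover have "k1 \<le> R" "(\<delta> + 1) * (real k - 1) + fp.Dl + 1 + ln (real k + 1) / fp.lam \<le> R"
      by (simp_all add: R_def)
    ultimately have "k1 \<le> real T / 2" "(\<delta> + 1) * (real k - 1) + fp.Dl + 1 + ln (real k + 1) / fp.lam \<le> real T / 2"
      by linarith+
    from fp.prob_done[OF this] bound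
    show "measure_pmf.prob (red_run \<delta> k T) {x. fst x = 0} \<ge> 1 - 2 / (1 + real k)" by simp
  qed
qed

lemma uniform_time_bound:
  fixes P :: "nat \<Rightarrow> nat \<Rightarrow> bool" and a C1 :: real and K0 :: nat
  assumes a: "0 \<le> a" and C1: "0 < C1"
    and large: "\<And>k T. K0 \<le> k \<Longrightarrow> a * real k + C1 * (log 2 (real k))\<^sup>2 - 1 \<le> real T \<Longrightarrow> P k T"
    and small: "\<And>k. 2 \<le> k \<Longrightarrow> \<exists>Tk. \<forall>T. Tk \<le> T \<longrightarrow> P k T"
  shows "\<exists>C>0. \<forall>k. 2 \<le> k \<longrightarrow> P k (nat \<lfloor>a * real k + C * (log 2 (real k))\<^sup>2\<rfloor>)"
proof -
  obtain Tf where Tf: "\<And>k T. 2 \<le> k \<Longrightarrow> Tf k \<le> T \<Longrightarrow> P k T" using small by metis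
  define C where "C = C1 + (\<Sum>k\<in>{2..<K0}. real (Tf k) + 1)"
  have S0: "0 \<le> (\<Sum>k\<in>{2..<K0}. real (Tf k) + 1)" by (intro sum_nonneg) auto
  have C: "0 < C" "C1 \<le> C" using C1 S0 by (simp_all add: C_def)
  show ?thesis
  proof (intro exI conjI allI impI)
    show "0 < C" by (rule C(1))
    fix k :: nat assume k: "2 \<le> k"
    define L where "L = (log 2 (real k))\<^sup>2"
    have L: "1 \<le> L" using k by (simp add: L_def one_le_power le_log_iff)
    define T where "T = nat \<lfloor>a * real k + C * L\<rfloor>"
    have T: "a * real k + C * L - 1 \<le> real T" using a C L by (simp add: T_def)
    have "P k T"
    proof (cases "K0 \<le> k")
      case True
      have "C1 * L \<le> C * L" using C L by (intro mult_right_mono) auto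
      then have "a * real k + C1 * (log 2 (real k))\<^sup>2 - 1 \<le> real T" using T unfolding L_def by linarith
      then show ?thesis by (rule large[OF True])
    next
      case False
      then have "real (Tf k) + 1 \<le> (\<Sum>k\<in>{2..<K0}. real (Tf k) + 1)"
        using k by (intro member_le_sum) auto
      also have "\<dots> \<le> C * L" using C1 C L by (simp add: C_def) (smt (verit) mult_le_cancel_left1)
      finally have "real (Tf k) + 1 \<le> C * L" .
      moreover have "0 \<le> a * real k" using a by simp
      ultimately have "real (Tf k) \<le> real T" using T by linarith
      then show ?thesis using k by (intro Tf) auto
    qed
    then show "P k (nat \<lfloor>a * real k + C * (log 2 (real k))\<^sup>2\<rfloor>)" by (simp add: T_def L_def)
  qed
qed

theorem mainTheorem1:
  fixes \<delta> :: real
  assumes "exp 1 < \<delta>" and "\<delta> \<le> (\<Sum>j=1..5. (5/6::real) ^ j)"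
  shows "\<exists>C>0. \<forall>k::nat. k \<ge> 2 \<longrightarrow>
           measure_pmf.prob
             (ofa_run \<delta> k (nat \<lfloor>2 * (\<delta> + 1) * real k + C * (log 2 (real k))\<^sup>2\<rfloor>))
             {g. fst g = {}}
           \<ge> 1 - 2 / (1 + real k)"
proof -
  interpret large_k \<delta> using assms(1) by unfold_locales
  have delta: "1 \<le> \<delta>" using delta by simp
  have "\<exists>C>0. \<forall>k. 2 \<le> k \<longrightarrow> measure_pmf.prob (red_run \<delta> k (nat \<lfloor>2 * (\<delta> + 1) * real k
          + C * (log 2 (real k))\<^sup>2\<rfloor>)) {x. fst x = 0} \<ge> 1 - 2 / (1 + real k)"
  proof (rule uniform_time_bound)
    show "0 < C2 + 2" using C2_nonneg by simp
  qed (use delta prob_done_large prob_done_eventually in auto)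
  then show ?thesis using prob_done_reduce[of \<delta>] delta by simp
qed

end
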